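(* For all integers $M\ge1$, $N\ge1$, with the convention $P(M',N')=0$ when $N'<0$: $$P(M,N)=\begin{cases}P(M,N-1)+q^{N}P(M-1,N), & M\text{ even},\\ P(M,N-1)+q^{N}P(M-1,N)+q^{M+N}P(M+1,N-2), & M\text{ odd}.\end{cases}$$
   Context: Paths: a path of length $L$ is a word in $\{U,D\}$ identified with the lattice path from $(0,0)$ with steps $U=(1,1)$, $D=(1,-1)$; $\lambda(x)$ is its height at $x$. Boxes: for integers $a,b$, $a+b$ odd, the box centered at $(a,b)$ is the closed square with vertices $(a\pm1,b),(a,b\pm1)$. For a path $\lambda$ of length $L$, $S(\lambda)$ = boxes centered at $(a,b)$ with $1\le a\le L$, $b-1\ge\lambda(a)$, $b+1\le a$; boxes with $a=L$ are anchor boxes; for a path $\mu$ weakly above $\lambda$, $\lambda/\mu=S(\lambda)\setminus S(\mu)$. A ballot tile of length $(2n,n')$ is a set of $2n+n'+1$ boxes with centers $c_0,\dots,c_{2n+n'}$ left to right, $c_{i+1}-c_i\in\{(1,\pm1)\}$, none lower than $c_0$, last $n'$ higher than $c_0$. A cover-inclusive ballot tiling of $\lambda/\mu$ is a partition into ballot tiles such that every tile with $n'\ge1$ has its rightmost box an anchor box, and for each tile $\tau$, $\tau-(0,2)$ either lies entirely below $\lambda$ (each translated box has top vertex at or below $\lambda$) or is contained in a single tile. Type BI: no tiles with $n'$ even $\ge2$, and for each $(n,n')$ with $n'$ odd the number of tiles of length $(2n,n')$ is even. A tile with $n'=0$ has $\mathrm{area}=2n+1$, $\mathrm{tiles}=1$;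 with $n'\ge1$, $\mathrm{area}=2n+n'+1$, $\mathrm{tiles}=0$; $\mathrm{art}=\frac12\sum_\tau(\mathrm{area}+\mathrm{tiles})$. $P(M,N)=\sum q^{\mathrm{art}}$ over all cover-inclusive type BI ballot tilings of $\lambda_{M,N}/\mu$, over all paths $\mu$ weakly above $\lambda_{M,N}=D^NU^M$. *)

theory Defs
  imports "HOL-Computational_Algebra.Polynomial" "HOL-Library.Disjoint_Sets"
begin

(* A path is a list of steps; True = U = (1,1), False = D = (1,-1). *)
type_synonym path = "bool list"

(* A box is identified with its center (a,b), a+b odd. *)
type_synonym box = "int \<times> int"

definition height :: "path \<Rightarrow> nat \<Rightarrow> int" where
  "height p x = sum_list (map (\<lambda>s. if s then 1 else -1) (take x p))"

definition Sreg :: "path \<Rightarrow> box set" where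
  "Sreg p = {(a,b). odd (a + b) \<and> 1 \<le> a \<and> a \<le> int (length p)
                 \<and> b - 1 \<ge> height p (nat a) \<and> b + 1 \<le> a}"

definition skew :: "path \<Rightarrow> path \<Rightarrow> box set" where
  "skew lam mu = Sreg lam - Sreg mu"

definition weakly_above :: "path \<Rightarrow> path \<Rightarrow> bool" where
  "weakly_above mu lam \<longleftrightarrow> length mu = length lam \<and>
     (\<forall>x \<le> length lam. height lam x \<le> height mu x)"

definition ballot_tile :: "box set \<Rightarrow> nat \<Rightarrow> nat \<Rightarrow> bool" where
  "ballot_tile tau n n' \<longleftrightarrow>
     (\<exists>c :: nat \<Rightarrow> box.
        tau = c ` {0..2*n+n'} \<and> card tau = 2*n+n'+1 \<and>
        (\<forall>i < 2*n+n'. fst (c (Suc i)) = fst (c i) + 1 \<and> \<bar>snd (c (Suc i)) - snd (c i)\<bar> = 1) \<and>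
        (\<forall>i \<le> 2*n+n'. snd (c i) \<ge> snd (c 0)) \<and>
        snd (c (2*n)) = snd (c 0) \<and>
        (\<forall>i. 2*n < i \<and> i \<le> 2*n+n' \<longrightarrow> snd (c i) > snd (c 0)))"

definition tile_len :: "box set \<Rightarrow> nat \<times> nat" where
  "tile_len tau = (THE nn. ballot_tile tau (fst nn) (snd nn))"

definition tile_area :: "box set \<Rightarrow> nat" where
  "tile_area tau = 2 * fst (tile_len tau) + snd (tile_len tau) + 1"

definition tile_tiles :: "box set \<Rightarrow> nat" where
  "tile_tiles tau = (if snd (tile_len tau) = 0 then 1 else 0)"

(* art = 1/2 sum (area + tiles); integral for type BI tilings *)
definition art :: "box set set \<Rightarrow> nat" where
  "art T = (\<Sum>tau\<in>T. tile_area tau + tile_tiles tau) div 2"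

definition shift_down :: "box set \<Rightarrow> box set" where
  "shift_down tau = (\<lambda>(a,b). (a, b - 2)) ` tau"

definition cover_inclusive_tiling :: "path \<Rightarrow> path \<Rightarrow> box set set \<Rightarrow> bool" where
  "cover_inclusive_tiling lam mu T \<longleftrightarrow>
     partition_on (skew lam mu) T \<and>
     (\<forall>tau\<in>T. \<exists>n n'. ballot_tile tau n n') \<and>
     (\<forall>tau\<in>T. snd (tile_len tau) \<ge> 1 \<longrightarrow>
        (\<forall>c\<in>tau. (\<forall>c'\<in>tau. fst c' \<le> fst c) \<longrightarrow> fst c = int (length lam))) \<and>
     (\<forall>tau\<in>T. (\<forall>(a,b)\<in>shift_down tau. b + 1 \<le> height lam (nat a))
               \<or> (\<exists>tau'\<in>T. shift_down tau \<subseteq> tau'))"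

definition typeBI :: "box set set \<Rightarrow> bool" where
  "typeBI T \<longleftrightarrow>
     (\<forall>tau\<in>T. \<not> (even (snd (tile_len tau)) \<and> snd (tile_len tau) \<ge> 2)) \<and>
     (\<forall>n n'. odd n' \<longrightarrow> even (card {tau\<in>T. tile_len tau = (n, n')}))"

definition lamMN :: "nat \<Rightarrow> nat \<Rightarrow> path" where
  "lamMN M N = replicate N False @ replicate M True"

definition PMN :: "nat \<Rightarrow> nat \<Rightarrow> int poly" where
  "PMN M N = (\<Sum>(mu, T) \<in> {(mu, T). weakly_above mu (lamMN M N) \<and>
                 cover_inclusive_tiling (lamMN M N) mu T \<and> typeBI T}.
               monom 1 (art T))"

end

theory Submission
  imports Defs
begin

text \<open>
  Split the pairs \<open>(\<mu>, T)\<close> for \<open>\<lambda> = D^N U^M\<close> by the first step of \<open>\<mu>\<close>. If it is \<open>D\<close>,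
  deleting the first column is a bijection onto the pairs for \<open>D^(N-1) U^M\<close>. If it is \<open>U\<close>,
  cover-inclusiveness forces every box resting on the initial descent of \<open>\<lambda>\<close> left of the
  valley to be a single tile, and the box \<open>v\<close> resting in the valley lies either in a single
  tile or in the straight tile \<open>A\<close> of length \<open>(0, M)\<close> rising from \<open>v\<close> to the anchor column.
  In the first case removing the \<open>N\<close> single boxes leaves the translate by \<open>(1, 1)\<close> of a pair
  for \<open>D^N U^(M-1)\<close>, and the removed tiles contribute \<open>q^N\<close>. In the second case the type BI
  conditions force \<open>M\<close> odd and a second tile of length \<open>(0, M)\<close>, which cover-inclusiveness
  pins down as \<open>A + (0, 2)\<close>; removing it, \<open>A\<close> and the \<open>N - 1\<close> single boxes leaves the
  translate of a pair for \<open>D^(N-2) U^(M+1)\<close>, and the removed tiles contribute \<open>q^(M+N)\<close>.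
\<close>

section \<open>Heights of paths\<close>

lemma height_0 [simp]: "height p 0 = 0"
  by (simp add: height_def)

lemma height_Nil [simp]: "height [] x = 0"
  by (simp add: height_def)

lemma height_Cons_Suc [simp]: "height (s # p) (Suc x) = (if s then 1 else -1) + height p x"
  by (simp add: height_def)

lemma height_Cons_nat:
  "1 \<le> a \<Longrightarrow> height (s # p) (nat a) = (if s then 1 else -1) + height p (nat (a - 1))"
proof -
  assume "1 \<le> a"
  then have "nat a = Suc (nat (a - 1))" by simp
  then show ?thesis by simp
qed

lemma height_le: "height p x \<le> int x"
proof (induction p arbitrary: x)
  case (Cons s p)
  then show ?case by (cases x) (auto, smt (verit) Cons.IH)
qed simp

lemma height_ge: "- int x \<le> height p x"
proof (induction p arbitrary: x)
  case (Cons s p)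
  show ?case
  proof (cases x)
    case (Suc y) then show ?thesis using Cons.IH[of y] by auto
  qed simp
qed simp

lemma even_height_add: "x \<le> length p \<Longrightarrow> even (height p x + int x)"
proof (induction p arbitrary: x)
  case (Cons s p)
  show ?case
  proof (cases x)
    case (Suc y)
    with Cons have "even (height p y + int y)" by simp
    then show ?thesis using Suc by (auto simp: algebra_simps)
  qed simp
qed simp

lemma height_replicate_False_append:
  "height (replicate N False @ q) x = (if x \<le> N then - int x else - int N + height q (x - N))"
proof (induction N arbitrary: x)
  case (Suc N)
  then show ?case by (cases x) auto
qed simp

lemma height_replicate_True: "height (replicate M True) x = int (min x M)"
proof (induction M arbitrary: x)
  case (Suc M)
  then show ?case by (cases x) auto
qed simp

lemma length_lamMN [simp]: "length (lamMN M N) = M + N"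
  by (simp add: lamMN_def)

lemma lamMN_Suc: "lamMN M (Suc N) = False # lamMN M N"
  by (simp add: lamMN_def)

lemma height_lamMN:
  "x \<le> M + N \<Longrightarrow> height (lamMN M N) x = (if x \<le> N then - int x else int x - 2 * int N)"
  by (auto simp: lamMN_def height_replicate_False_append height_replicate_True)

definition lam_height :: "nat \<Rightarrow> int \<Rightarrow> int" where
  "lam_height N a = (if a \<le> int N then - a else a - 2 * int N)"

lemma height_lamMN_eq_lam_height:
  "0 \<le> a \<Longrightarrow> a \<le> int (M + N) \<Longrightarrow> height (lamMN M N) (nat a) = lam_height N a"
proof -
  assume a: "0 \<le> a" "a \<le> int (M + N)"
  then have "(nat a \<le> N) = (a \<le> int N)" by linarith
  then show ?thesis using height_lamMN[of "nat a" M N] a by (simp add: lam_height_def)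
qed

section \<open>Ballot tiles as height profiles\<close>

definition tile_at :: "int \<Rightarrow> (nat \<Rightarrow> int) \<Rightarrow> nat \<Rightarrow> box set" where
  "tile_at a0 f k = (\<lambda>i. (a0 + int i, f i)) ` {0..k}"

definition ballot_profile :: "(nat \<Rightarrow> int) \<Rightarrow> nat \<Rightarrow> nat \<Rightarrow> bool" where
  "ballot_profile f n n' \<longleftrightarrow> (\<forall>i < 2*n+n'. \<bar>f (Suc i) - f i\<bar> = 1) \<and> (\<forall>i \<le> 2*n+n'. f 0 \<le> f i)
     \<and> f (2*n) = f 0 \<and> (\<forall>i. 2*n < i \<and> i \<le> 2*n+n' \<longrightarrow> f 0 < f i)"

lemma mem_tile_at: "(x, y) \<in> tile_at a0 f k \<longleftrightarrow> a0 \<le> x \<and> x \<le> a0 + int k \<and> y = f (nat (x - a0))"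
  unfolding tile_at_def
proof
  assume "(x, y) \<in> (\<lambda>i. (a0 + int i, f i)) ` {0..k}"
  then show "a0 \<le> x \<and> x \<le> a0 + int k \<and> y = f (nat (x - a0))" by auto
next
  assume h: "a0 \<le> x \<and> x \<le> a0 + int k \<and> y = f (nat (x - a0))"
  then have "(x, y) = (a0 + int (nat (x - a0)), f (nat (x - a0)))" "nat (x - a0) \<in> {0..k}" by auto
  then show "(x, y) \<in> (\<lambda>i. (a0 + int i, f i)) ` {0..k}" by blast
qed

lemma mem_tile_at': "p \<in> tile_at a0 f k \<longleftrightarrow> a0 \<le> fst p \<and> fst p \<le> a0 + int k \<and> snd p = f (nat (fst p - a0))"
  using mem_tile_at[of "fst p" "snd p"] by simp

lemma tile_at_memI: "i \<le> k \<Longrightarrow> (a0 + int i, f i) \<in> tile_at a0 f k"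
  by (simp add: tile_at_def)

lemma tile_at_ne[simp]: "tile_at a0 f k \<noteq> {}"
  by (simp add: tile_at_def)

lemma finite_tile_at[simp]: "finite (tile_at a0 f k)"
  by (simp add: tile_at_def)

lemma card_tile_at: "card (tile_at a0 f k) = Suc k"
proof -
  have "inj_on (\<lambda>i. (a0 + int i, f i)) {0..k}" by (auto simp: inj_on_def)
  then show ?thesis unfolding tile_at_def by (simp add: card_image)
qed

lemma ballot_tile_iff:
  "ballot_tile tau n n' \<longleftrightarrow> (\<exists>a0 f. tau = tile_at a0 f (2*n+n') \<and> ballot_profile f n n')"
proof
  assume "ballot_tile tau n n'"
  then obtain c where c: "tau = c ` {0..2*n+n'}" "card tau = 2*n+n'+1"
    "\<forall>i < 2*n+n'. fst (c (Suc i)) = fst (c i) + 1 \<and> \<bar>snd (c (Suc i)) - snd (c i)\<bar> = 1"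
    "\<forall>i \<le> 2*n+n'. snd (c i) \<ge> snd (c 0)" "snd (c (2*n)) = snd (c 0)"
    "\<forall>i. 2*n < i \<and> i \<le> 2*n+n' \<longrightarrow> snd (c i) > snd (c 0)"
    unfolding ballot_tile_def by blast
  have fc: "i \<le> 2*n+n' \<Longrightarrow> fst (c i) = fst (c 0) + int i" for i
  proof (induction i)
    case 0 then show ?case by simp
  next
    case (Suc i)
    then have "i < 2*n+n'" by simp
    then have "fst (c (Suc i)) = fst (c i) + 1" using c(3) by blast
    then show ?case using Suc by simp
  qed
  have "tau = tile_at (fst (c 0)) (\<lambda>i. snd (c i)) (2*n+n')"
    unfolding c(1) tile_at_def
  proof (rule image_cong)
    fix i assume "i \<in> {0..2*n+n'}"
    then show "c i = (fst (c 0) + int i, snd (c i))" using fc[of i] by (simp add: prod_eq_iff)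
  qed simp
  moreover have "ballot_profile (\<lambda>i. snd (c i)) n n'" unfolding ballot_profile_def using c(3-6) by blast
  ultimately show "\<exists>a0 f. tau = tile_at a0 f (2*n+n') \<and> ballot_profile f n n'" by blast
next
  assume "\<exists>a0 f. tau = tile_at a0 f (2*n+n') \<and> ballot_profile f n n'"
  then obtain a0 f where t: "tau = tile_at a0 f (2*n+n')" and b: "ballot_profile f n n'" by blast
  show "ballot_tile tau n n'" unfolding ballot_tile_def
  proof (rule exI[of _ "\<lambda>i. (a0 + int i, f i)"], intro conjI)
    show "tau = (\<lambda>i. (a0 + int i, f i)) ` {0..2 * n + n'}" using t by (simp add: tile_at_def)
    show "card tau = 2 * n + n' + 1" using t card_tile_at[of a0 f "2*n+n'"] by simp
  qed (use b in \<open>unfold ballot_profile_def, auto\<close>)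
qed

lemma tile_at_eqD:
  assumes "tile_at a0 f k = tile_at b0 g l"
  shows "a0 = b0" "k = l" "\<And>i. i \<le> k \<Longrightarrow> f i = g i"
proof -
  have m1: "(a0, f 0) \<in> tile_at a0 f k" unfolding mem_tile_at by simp
  have m2: "(b0, g 0) \<in> tile_at b0 g l" unfolding mem_tile_at by simp
  have "b0 \<le> a0" using m1 unfolding assms mem_tile_at by blast
  moreover have "a0 \<le> b0" using m2 unfolding assms[symmetric] mem_tile_at by blast
  ultimately show a: "a0 = b0" by simp
  show kl: "k = l" using card_tile_at[of a0 f k] card_tile_at[of b0 g l] assms by simp
  fix i assume i: "i \<le> k"
  have "(a0 + int i, f i) \<in> tile_at a0 f k" unfolding mem_tile_at using i by simp
  then have "(a0 + int i, f i) \<in> tile_at b0 g l" unfolding assms .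
  then show "f i = g i" using a unfolding mem_tile_at by simp
qed

lemma ballot_profile_unique:
  assumes "ballot_profile f n n'" "ballot_profile f m m'" "2*n+n' = 2*m+m'"
  shows "n = m \<and> n' = m'"
proof -
  have A: "\<And>i. 2*n < i \<Longrightarrow> i \<le> 2*n+n' \<Longrightarrow> f 0 < f i" "f (2*n) = f 0"
    using assms(1) unfolding ballot_profile_def by blast+
  have B: "\<And>i. 2*m < i \<Longrightarrow> i \<le> 2*m+m' \<Longrightarrow> f 0 < f i" "f (2*m) = f 0"
    using assms(2) unfolding ballot_profile_def by blast+
  have "\<not> 2*n < 2*m"
  proof
    assume "2*n < 2*m"
    then have "f 0 < f (2*m)" using A(1)[of "2*m"] assms(3) by simp
    then show False using B(2) by simp
  qed
  moreover have "\<not> 2*m < 2*n"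
  proof
    assume "2*m < 2*n"
    then have "f 0 < f (2*n)" using B(1)[of "2*n"] assms(3) by simp
    then show False using A(2) by simp
  qed
  ultimately show ?thesis using assms(3) by simp
qed

lemma ballot_profile_cong: "(\<And>i. i \<le> 2*n+n' \<Longrightarrow> f i = g i) \<Longrightarrow> ballot_profile f n n' \<Longrightarrow> ballot_profile g n n'"
  unfolding ballot_profile_def
proof (intro conjI allI impI, goal_cases)
  case (1 i) then show ?case by (metis Suc_leI less_imp_le_nat)
next
  case (2 i) then show ?case by (metis le0)
next
  case 3 then show ?case by (metis le0 le_add1)
next
  case (4 i) then show ?case by (metis le0)
qed

lemma ballot_tile_unique:
  assumes "ballot_tile tau n n'" "ballot_tile tau m m'"
  shows "n = m \<and> n' = m'"
proof -
  obtain a0 f where t: "tau = tile_at a0 f (2*n+n')" and b: "ballot_profile f n n'"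
    using assms(1) ballot_tile_iff by blast
  obtain b0 g where t': "tau = tile_at b0 g (2*m+m')" and b': "ballot_profile g m m'"
    using assms(2) ballot_tile_iff by blast
  note e = tile_at_eqD[OF t[symmetric, THEN trans, OF t']]
  have "ballot_profile f m m'" using ballot_profile_cong[of m m' g f] b' e by (metis)
  then show ?thesis using ballot_profile_unique[OF b _ e(2)] by blast
qed

lemma tile_len_eq: "ballot_tile tau n n' \<Longrightarrow> tile_len tau = (n, n')"
  unfolding tile_len_def
  by (rule the_equality) (auto dest: ballot_tile_unique)

lemma tile_at_single: "{(a, b)} = tile_at a (\<lambda>_. b) 0"
  by (simp add: tile_at_def)

lemma ballot_single: "ballot_tile {p} 0 0"
proof -
  obtain a b where "p = (a, b)" by fastforce
  then show ?thesis unfolding ballot_tile_iff tile_at_single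
    by (intro exI[of _ a] exI[of _ "\<lambda>_. b"]) (auto simp: ballot_profile_def tile_at_single)
qed

lemma tile_len_single[simp]: "tile_len {p} = (0, 0)"
  by (rule tile_len_eq[OF ballot_single])

section \<open>Translations\<close>

definition shift_box :: "int \<Rightarrow> int \<Rightarrow> box \<Rightarrow> box" where
  "shift_box da db p = (fst p + da, snd p + db)"

definition shift_tile :: "int \<Rightarrow> int \<Rightarrow> box set \<Rightarrow> box set" where
  "shift_tile da db tau = shift_box da db ` tau"

definition shift_tiling :: "int \<Rightarrow> int \<Rightarrow> box set set \<Rightarrow> box set set" where
  "shift_tiling da db T = shift_tile da db ` T"

lemma shift_box_simp[simp]: "shift_box da db (a, b) = (a + da, b + db)"
  by (simp add: shift_box_def)

lemma inj_shift_box: "inj (shift_box da db)"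
  by (auto simp: inj_def shift_box_def prod_eq_iff)

lemma mem_shift_tile: "p \<in> shift_tile da db tau \<longleftrightarrow> (fst p - da, snd p - db) \<in> tau"
  unfolding shift_tile_def shift_box_def by (cases p) force

lemma mem_shift_tile'[simp]: "(a, b) \<in> shift_tile da db tau \<longleftrightarrow> (a - da, b - db) \<in> tau"
  by (simp add: mem_shift_tile)

lemma shift_tile_shift_tile[simp]: "shift_tile da db (shift_tile da' db' tau) = shift_tile (da + da') (db + db') tau"
  by (auto simp: mem_shift_tile algebra_simps)

lemma shift_tile_00[simp]: "shift_tile 0 0 tau = tau"
  by (auto simp: mem_shift_tile)

lemma shift_tile_inv[simp]: "shift_tile (- da) (- db) (shift_tile da db tau) = tau"
  by simp

lemma shift_tile_inv'[simp]: "shift_tile da db (shift_tile (- da) (- db) tau) = tau"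
  by simp

lemma inj_shift_tile: "inj (shift_tile da db)"
  by (metis injI shift_tile_inv)

lemma shift_tile_eq_iff[simp]: "shift_tile da db x = shift_tile da db y \<longleftrightarrow> x = y"
  using inj_shift_tile by (auto dest: injD)

lemma shift_tile_subset_iff[simp]: "shift_tile da db x \<subseteq> shift_tile da db y \<longleftrightarrow> x \<subseteq> y"
  by (auto simp: subset_iff mem_shift_tile) (metis add_diff_cancel prod.collapse)

lemma shift_tile_empty_iff[simp]: "shift_tile da db x = {} \<longleftrightarrow> x = {}"
  by (simp add: shift_tile_def)

lemma shift_tile_empty[simp]: "shift_tile da db {} = {}"
  by (simp add: shift_tile_def)

lemma shift_tile_single[simp]: "shift_tile da db {(a,b)} = {(a + da, b + db)}"
  by (simp add: shift_tile_def)

lemma finite_shift_tile[simp]: "finite (shift_tile da db tau) \<longleftrightarrow> finite tau"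
  by (simp add: shift_tile_def finite_image_iff inj_on_def inj_shift_box[THEN injD])

lemma card_shift_tile[simp]: "card (shift_tile da db tau) = card tau"
  by (simp add: shift_tile_def card_image inj_on_def inj_shift_box[THEN injD])

lemma shift_tiling_shift_tiling[simp]: "shift_tiling da db (shift_tiling da' db' T) = shift_tiling (da + da') (db + db') T"
  by (simp add: shift_tiling_def image_image)

lemma shift_tiling_00[simp]: "shift_tiling 0 0 T = T"
  by (simp add: shift_tiling_def)

lemma shift_tiling_inv[simp]: "shift_tiling (- da) (- db) (shift_tiling da db T) = T"
  by simp

lemma inj_shift_tiling: "inj (shift_tiling da db)"
  by (metis injI shift_tiling_inv)

lemma mem_shift_tiling: "tau \<in> shift_tiling da db T \<longleftrightarrow> shift_tile (- da) (- db) tau \<in> T"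
  unfolding shift_tiling_def by (metis image_iff shift_tile_inv shift_tile_inv')

lemma shift_tile_mem_shift_tiling[simp]: "shift_tile da db tau \<in> shift_tiling da db T \<longleftrightarrow> tau \<in> T"
  by (simp add: mem_shift_tiling)

lemma finite_shift_tiling[simp]: "finite (shift_tiling da db T) \<longleftrightarrow> finite T"
  by (simp add: shift_tiling_def finite_image_iff inj_on_def)

lemma shift_tile_tile_at: "shift_tile da db (tile_at a0 f k) = tile_at (a0 + da) (\<lambda>i. f i + db) k"
  unfolding shift_tile_def tile_at_def image_image by (simp add: algebra_simps)

lemma ballot_profile_shift: "ballot_profile (\<lambda>i. f i + db) n n' \<longleftrightarrow> ballot_profile f n n'"
  unfolding ballot_profile_def by simp

lemma ballot_tile_shift_tile_imp: "ballot_tile tau n n' \<Longrightarrow> ballot_tile (shift_tile da db tau) n n'"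
  unfolding ballot_tile_iff
proof (elim exE conjE)
  fix a0 f assume "tau = tile_at a0 f (2 * n + n')" "ballot_profile f n n'"
  then show "\<exists>a0 f. shift_tile da db tau = tile_at a0 f (2 * n + n') \<and> ballot_profile f n n'"
    by (intro exI[of _ "a0 + da"] exI[of _ "\<lambda>i. f i + db"]) (simp add: shift_tile_tile_at ballot_profile_shift)
qed

lemma ballot_tile_shift_tile[simp]: "ballot_tile (shift_tile da db tau) n n' \<longleftrightarrow> ballot_tile tau n n'"
  by (metis ballot_tile_shift_tile_imp shift_tile_inv)

lemma tile_len_shift_tile[simp]: "tile_len (shift_tile da db tau) = tile_len tau"
  by (simp add: tile_len_def)

lemma shift_down_eq_shift_tile: "shift_down tau = shift_tile 0 (-2) tau"
  unfolding shift_down_def shift_tile_def shift_box_def by (simp add: case_prod_beta')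

lemma shift_down_singleton: "shift_down {(a, b)} = {(a, b - 2)}"
  by (simp add: shift_down_eq_shift_tile)

lemma shift_down_memD: "shift_down tau \<subseteq> tau' \<Longrightarrow> (a, b) \<in> tau \<Longrightarrow> (a, b - 2) \<in> tau'"
  unfolding shift_down_eq_shift_tile by (auto simp: subset_iff mem_shift_tile)

lemma shift_down_subset_singleton:
  assumes "shift_down tau \<subseteq> {(a, c)}" "tau \<noteq> {}"
  shows "tau = {(a, c + 2)}"
proof -
  have "p = (a, c + 2)" if "p \<in> tau" for p
  proof -
    obtain x y where p: "p = (x, y)" by fastforce
    have "(x, y - 2) \<in> shift_down tau" using that p unfolding shift_down_eq_shift_tile by simp
    then show ?thesis using assms(1) p by auto
  qed
  then show ?thesis using assms(2) by auto
qed

lemma shift_down_tile_at: "shift_down (tile_at a0 g k) = tile_at a0 (\<lambda>i. g i - 2) k"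
  by (simp add: shift_down_eq_shift_tile shift_tile_tile_at)

section \<open>Cover-inclusive tilings of arbitrary regions\<close>

abbreviation rests_on :: "(int \<Rightarrow> int) \<Rightarrow> box set \<Rightarrow> bool" where
  "rests_on h tau \<equiv> \<forall>p\<in>tau. snd p - 1 \<le> h (fst p)"

text \<open>
  \<open>cover_inclusive_tiling\<close> with the region, the lower boundary \<open>h\<close> and the anchor column
  \<open>L\<close> as parameters, so that it can be transported along translations.
\<close>
definition ci_tiling :: "box set \<Rightarrow> (int \<Rightarrow> int) \<Rightarrow> int \<Rightarrow> box set set \<Rightarrow> bool" where
  "ci_tiling R h L T \<longleftrightarrow> partition_on R T \<and> (\<forall>tau\<in>T. \<exists>n n'. ballot_tile tau n n') \<and>
     (\<forall>tau\<in>T. snd (tile_len tau) \<ge> 1 \<longrightarrow> (\<forall>c\<in>tau. (\<forall>c'\<in>tau. fst c' \<le> fst c) \<longrightarrow> fst c = L)) \<and>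
     (\<forall>tau\<in>T. rests_on h tau \<or> (\<exists>tau'\<in>T. shift_down tau \<subseteq> tau'))"

lemma ci_tiling_cover: "cover_inclusive_tiling lam mu T \<longleftrightarrow>
   ci_tiling (skew lam mu) (\<lambda>a. height lam (nat a)) (int (length lam)) T"
proof -
  have "(\<forall>(a,b)\<in>shift_down tau. b + 1 \<le> height lam (nat a)) \<longleftrightarrow>
        (\<forall>p\<in>tau. snd p - 1 \<le> height lam (nat (fst p)))" for tau
    unfolding shift_down_def by auto
  then show ?thesis unfolding cover_inclusive_tiling_def ci_tiling_def by simp
qed

lemma ci_tiling_parts:
  assumes "ci_tiling R h L T"
  shows "partition_on R T" "\<And>tau. tau \<in> T \<Longrightarrow> \<exists>n n'. ballot_tile tau n n'"
    "\<And>tau c. tau \<in> T \<Longrightarrow> snd (tile_len tau) \<ge> 1 \<Longrightarrow> c \<in> tau \<Longrightarrow> (\<forall>c'\<in>tau. fst c' \<le> fst c) \<Longrightarrow> fst c = L"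
    "\<And>tau. tau \<in> T \<Longrightarrow> rests_on h tau \<or> (\<exists>tau'\<in>T. shift_down tau \<subseteq> tau')"
  using assms unfolding ci_tiling_def by blast+

lemma ci_tiling_intro:
  assumes "partition_on R T" "\<And>tau. tau \<in> T \<Longrightarrow> \<exists>n n'. ballot_tile tau n n'"
    "\<And>tau c. tau \<in> T \<Longrightarrow> snd (tile_len tau) \<ge> 1 \<Longrightarrow> c \<in> tau \<Longrightarrow> (\<forall>c'\<in>tau. fst c' \<le> fst c) \<Longrightarrow> fst c = L"
    "\<And>tau. tau \<in> T \<Longrightarrow> rests_on h tau \<or> (\<exists>tau'\<in>T. shift_down tau \<subseteq> tau')"
  shows "ci_tiling R h L T"
  using assms unfolding ci_tiling_def by blast

lemma partition_on_shift_tiling: "partition_on R T \<Longrightarrow> partition_on (shift_tile da db R) (shift_tiling da db T)"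
proof -
  assume P: "partition_on R T"
  have "\<Union>(shift_tiling da db T) = shift_tile da db (\<Union>T)" by (auto simp: shift_tiling_def shift_tile_def)
  moreover have "disjoint (shift_tiling da db T)"
    unfolding shift_tiling_def shift_tile_def
    by (rule disjoint_image) (use P inj_shift_box in \<open>auto simp: partition_on_def intro: inj_on_subset\<close>)
  moreover have "{} \<notin> shift_tiling da db T" using P by (auto simp: partition_on_def mem_shift_tiling)
  ultimately show ?thesis using P by (simp add: partition_on_def)
qed

lemma anchored_shift_tile:
  assumes "\<forall>c\<in>t. (\<forall>c'\<in>t. fst c' \<le> fst c) \<longrightarrow> fst c = L"
  shows "\<forall>c\<in>shift_tile da db t. (\<forall>c'\<in>shift_tile da db t. fst c' \<le> fst c) \<longrightarrow> fst c = L + da"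
proof (intro ballI impI)
  fix c assume c: "c \<in> shift_tile da db t" and max: "\<forall>c'\<in>shift_tile da db t. fst c' \<le> fst c"
  obtain c0 where c0: "c0 \<in> t" "c = shift_box da db c0" using c by (auto simp: shift_tile_def)
  have "\<forall>c'\<in>t. fst c' \<le> fst c0"
  proof
    fix c' assume "c' \<in> t"
    then have "shift_box da db c' \<in> shift_tile da db t" by (simp add: shift_tile_def)
    then have "fst (shift_box da db c') \<le> fst c" using max by blast
    then show "fst c' \<le> fst c0" using c0 by (simp add: shift_box_def)
  qed
  then show "fst c = L + da" using assms c0 by (simp add: shift_box_def)
qed

lemma ci_tiling_shift:
  assumes ci: "ci_tiling R h L T"
  shows "ci_tiling (shift_tile da db R) (\<lambda>a. h (a - da) + db) (L + da) (shift_tiling da db T)"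
proof (rule ci_tiling_intro)
  note c = ci_tiling_parts[OF ci]
  show "partition_on (shift_tile da db R) (shift_tiling da db T)" by (rule partition_on_shift_tiling[OF c(1)])
  fix tau assume "tau \<in> shift_tiling da db T"
  then obtain t where t: "t \<in> T" "tau = shift_tile da db t" by (auto simp: shift_tiling_def)
  show "\<exists>n n'. ballot_tile tau n n'" using t c(2) by simp
  show "\<And>c. 1 \<le> snd (tile_len tau) \<Longrightarrow> c \<in> tau \<Longrightarrow> \<forall>c'\<in>tau. fst c' \<le> fst c \<Longrightarrow> fst c = L + da"
    using anchored_shift_tile[of t L da db] c(3)[OF t(1)] t(2) by simp
  from c(4)[OF t(1)]
  show "rests_on (\<lambda>a. h (a - da) + db) tau \<or> (\<exists>tau'\<in>shift_tiling da db T. shift_down tau \<subseteq> tau')"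
  proof
    assume "rests_on h t"
    then have "rests_on (\<lambda>a. h (a - da) + db) tau" using t(2) by (auto simp: shift_tile_def shift_box_def)
    then show ?thesis ..
  next
    assume "\<exists>tau'\<in>T. shift_down t \<subseteq> tau'"
    then obtain t' where "t' \<in> T" "shift_down t \<subseteq> t'" by blast
    moreover have "shift_down tau = shift_tile da db (shift_down t)"
      using t(2) by (simp add: shift_down_eq_shift_tile add.commute)
    ultimately have "shift_tile da db t' \<in> shift_tiling da db T" "shift_down tau \<subseteq> shift_tile da db t'"
      by simp_all
    then show ?thesis by blast
  qed
qed

lemma ci_tiling_shift_iff: "ci_tiling (shift_tile da db R) (\<lambda>a. h (a - da) + db) (L + da) (shift_tiling da db T) \<longleftrightarrow> ci_tiling R h L T"
proof
  assume "ci_tiling (shift_tile da db R) (\<lambda>a. h (a - da) + db) (L + da) (shift_tiling da db T)"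
  from ci_tiling_shift[OF this, of "-da" "-db"] show "ci_tiling R h L T" by simp
qed (rule ci_tiling_shift)

lemma ci_tiling_subset: "ci_tiling R h L T \<Longrightarrow> tau \<in> T \<Longrightarrow> tau \<subseteq> R"
  unfolding ci_tiling_def partition_on_def by blast

lemma ci_tiling_cong:
  assumes "\<And>p. p \<in> R \<Longrightarrow> h (fst p) = h' (fst p)"
  shows "ci_tiling R h L T \<longleftrightarrow> ci_tiling R h' L T"
proof -
  have "partition_on R T \<Longrightarrow> tau \<in> T \<Longrightarrow> rests_on h tau = rests_on h' tau" for tau
  proof -
    assume "partition_on R T" "tau \<in> T"
    then have "\<And>p. p \<in> tau \<Longrightarrow> h (fst p) = h' (fst p)" using assms unfolding partition_on_def by blast
    then show ?thesis by auto
  qed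
  then show ?thesis unfolding ci_tiling_def by (intro iffI; elim conjE; intro conjI) auto
qed

section \<open>Pairs of paths and tilings\<close>

definition region :: "path \<Rightarrow> path \<Rightarrow> box set" where
  "region lam mu = {(a,b). odd (a + b) \<and> 1 \<le> a \<and> a \<le> int (length lam) \<and>
      height lam (nat a) < b \<and> b < height mu (nat a)}"

lemma skew_eq_region:
  assumes "length mu = length lam"
  shows "skew lam mu = region lam mu"
proof (intro set_eqI iffI)
  fix p assume "p \<in> skew lam mu"
  then obtain a b where p: "p = (a, b)" "odd (a + b)" "1 \<le> a" "a \<le> int (length lam)"
      "b - 1 \<ge> height lam (nat a)" "b + 1 \<le> a" "\<not> b - 1 \<ge> height mu (nat a)"
    using assms unfolding skew_def Sreg_def by auto
  have "even (height mu (nat a) + int (nat a))"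
    by (rule even_height_add) (use p assms in auto)
  then have "even (height mu (nat a) + a)" using p(3) by simp
  then have "b < height mu (nat a)" using p(2) p(7) by presburger
  then show "p \<in> region lam mu" using p unfolding region_def by auto
next
  fix p assume "p \<in> region lam mu"
  then obtain a b where p: "p = (a, b)" "odd (a + b)" "1 \<le> a" "a \<le> int (length lam)"
      "height lam (nat a) < b" "b < height mu (nat a)"
    unfolding region_def by auto
  have "height mu (nat a) \<le> a" using height_le[of mu "nat a"] p(3) by simp
  then have "b + 1 \<le> a" using p(2) p(6) by presburger
  then show "p \<in> skew lam mu" using p assms unfolding skew_def Sreg_def by auto
qed

definition bi_tilings :: "path \<Rightarrow> (path \<times> box set set) set" where
  "bi_tilings lam = {(mu, T). weakly_above mu lam \<and> cover_inclusive_tiling lam mu T \<and> typeBI T}"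

lemma PMN_bi_tilings: "PMN M N = (\<Sum>(mu, T) \<in> bi_tilings (lamMN M N). monom 1 (art T))"
  unfolding PMN_def bi_tilings_def by simp

lemma region_bound: "region lam mu \<subseteq> {-int (length lam)..int (length lam)} \<times> {-int (length lam)..int (length lam)}"
proof
  fix p assume "p \<in> region lam mu"
  then obtain a b where p: "p = (a, b)" "1 \<le> a" "a \<le> int (length lam)"
      "height lam (nat a) < b" "b < height mu (nat a)"
    unfolding region_def by auto
  have "- int (nat a) \<le> height lam (nat a)" by (rule height_ge)
  moreover have "height mu (nat a) \<le> int (nat a)" by (rule height_le)
  ultimately show "p \<in> {-int (length lam)..int (length lam)} \<times> {-int (length lam)..int (length lam)}"
    using p by auto
qed

lemma finite_bi_tilings: "finite (bi_tilings lam)"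
proof -
  let ?B = "{-int (length lam)..int (length lam)} \<times> {-int (length lam)..int (length lam)}"
  have "bi_tilings lam \<subseteq> {mu. length mu = length lam} \<times> Pow (Pow ?B)"
  proof
    fix x assume "x \<in> bi_tilings lam"
    then obtain mu T where x: "x = (mu, T)" "weakly_above mu lam" "cover_inclusive_tiling lam mu T"
      unfolding bi_tilings_def by auto
    have l: "length mu = length lam" using x(2) by (simp add: weakly_above_def)
    have "partition_on (skew lam mu) T" using x(3) by (simp add: cover_inclusive_tiling_def)
    then have "\<Union>T \<subseteq> ?B" using region_bound[of lam mu] skew_eq_region[OF l] by (simp add: partition_on_def)
    then show "x \<in> {mu. length mu = length lam} \<times> Pow (Pow ?B)" using x l by auto
  qed
  moreover have "finite ({mu :: path. length mu = length lam} \<times> Pow (Pow ?B))"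
  proof -
    have "{mu :: bool list. length mu = length lam} = {xs. set xs \<subseteq> UNIV \<and> length xs = length lam}" by simp
    then have f1: "finite {mu :: bool list. length mu = length lam}"
      using finite_lists_length_eq[of "UNIV :: bool set" "length lam"] by simp
    show ?thesis by (rule finite_cartesian_product[OF f1]) auto
  qed
  ultimately show ?thesis by (rule finite_subset)
qed

lemma bi_tilings_iff: "(mu, T) \<in> bi_tilings lam \<longleftrightarrow> weakly_above mu lam \<and>
   ci_tiling (region lam mu) (\<lambda>a. height lam (nat a)) (int (length lam)) T \<and> typeBI T"
  unfolding bi_tilings_def weakly_above_def by (auto simp: ci_tiling_cover skew_eq_region)

lemma sum_shift_tiling: "(\<Sum>tau\<in>shift_tiling da db T. f (tile_len tau)) = (\<Sum>tau\<in>T. f (tile_len tau))"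
proof -
  have "(\<Sum>tau\<in>shift_tiling da db T. f (tile_len tau)) = (\<Sum>tau\<in>T. f (tile_len (shift_tile da db tau)))"
    unfolding shift_tiling_def by (rule sum.reindex_cong[where l = "shift_tile da db"]) (auto simp: inj_on_def)
  then show ?thesis by simp
qed

lemma art_shift_tiling[simp]: "art (shift_tiling da db T) = art T"
  unfolding art_def tile_area_def tile_tiles_def
  using sum_shift_tiling[of "\<lambda>x. 2 * fst x + snd x + 1 + (if snd x = 0 then 1 else 0)" da db T] by simp

lemma card_filter_shift_tiling: "card {tau \<in> shift_tiling da db T. P (tile_len tau)} = card {tau \<in> T. P (tile_len tau)}"
proof -
  have "{tau \<in> shift_tiling da db T. P (tile_len tau)} = shift_tile da db ` {tau \<in> T. P (tile_len tau)}"
    by (auto simp: shift_tiling_def)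
  then show ?thesis by (simp add: card_image inj_on_def)
qed

lemma typeBI_shift_tiling[simp]: "typeBI (shift_tiling da db T) \<longleftrightarrow> typeBI T"
proof -
  have cards: "card {tau \<in> shift_tiling da db T. tile_len tau = (n, n')} = card {tau \<in> T. tile_len tau = (n, n')}"
    for n n' using card_filter_shift_tiling[of da db T "\<lambda>x. x = (n, n')"] by simp
  have "(\<forall>tau\<in>shift_tiling da db T. Q (tile_len tau)) \<longleftrightarrow> (\<forall>tau\<in>T. Q (tile_len tau))" for Q
    by (auto simp: shift_tiling_def)
  from this[of "\<lambda>x. \<not> (even (snd x) \<and> snd x \<ge> 2)"] show ?thesis
    unfolding typeBI_def cards by simp
qed

lemma finite_of_bi_tilings: "(mu, T) \<in> bi_tilings lam \<Longrightarrow> finite T"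
proof -
  assume "(mu, T) \<in> bi_tilings lam"
  then have "partition_on (region lam mu) T" unfolding bi_tilings_iff ci_tiling_def by simp
  moreover have "finite (region lam mu)" using region_bound[of lam mu] by (rule finite_subset) simp
  ultimately show "finite T" using finite_elements by blast
qed

section \<open>Gluing tilings\<close>

lemma partition_on_Un:
  assumes "partition_on A P" "partition_on B Q" "A \<inter> B = {}"
  shows "partition_on (A \<union> B) (P \<union> Q)"
  using assms by (auto simp: partition_on_def intro: disjoint_union)

lemma partition_on_Diff:
  assumes "partition_on A P" "Q \<subseteq> P"
  shows "partition_on (A - \<Union>Q) (P - Q)"
proof (rule partition_onI)
  have d: "p \<inter> q = {}" if "p \<in> P" "q \<in> P" "p \<noteq> q" for p q
    using assms(1) that unfolding partition_on_def pairwise_def disjnt_def by blast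
  show "\<Union>(P - Q) = A - \<Union>Q"
  proof
    show "\<Union>(P - Q) \<subseteq> A - \<Union>Q"
    proof
      fix x assume "x \<in> \<Union>(P - Q)"
      then obtain p where p: "p \<in> P" "p \<notin> Q" "x \<in> p" by auto
      have "x \<in> A" using p assms(1) by (auto simp: partition_on_def)
      moreover have "x \<notin> \<Union>Q"
      proof
        assume "x \<in> \<Union>Q"
        then obtain q where "q \<in> Q" "x \<in> q" by auto
        then show False using d[of p q] p assms(2) by auto
      qed
      ultimately show "x \<in> A - \<Union>Q" by simp
    qed
    show "A - \<Union>Q \<subseteq> \<Union>(P - Q)" using assms(1) by (auto simp: partition_on_def)
  qed
  show "{} \<notin> P - Q" using assms by (auto simp: partition_on_def)
  fix p q assume "p \<in> P - Q" "q \<in> P - Q" "p \<noteq> q"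
  then show "disjnt p q" using d by (auto simp: disjnt_def)
qed

lemma disjoint_shift_tiling:
  assumes "partition_on R' T1" "\<Union>E \<inter> shift_tile 1 1 R' = {}"
  shows "E \<inter> shift_tiling 1 1 T1 = {}"
proof (rule ccontr)
  assume "E \<inter> shift_tiling 1 1 T1 \<noteq> {}"
  then obtain t where t: "t \<in> E" "t \<in> shift_tiling 1 1 T1" by blast
  then obtain t1 where t1: "t1 \<in> T1" "t = shift_tile 1 1 t1" by (auto simp: shift_tiling_def)
  have "t1 \<subseteq> R'" "t1 \<noteq> {}" using assms t1 by (auto simp: partition_on_def)
  then have "t \<subseteq> shift_tile 1 1 R'" "t \<noteq> {}" using t1 by (auto simp: shift_tile_def)
  moreover have "t \<subseteq> \<Union>E" using t(1) by blast
  ultimately show False using assms(2) by blast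
qed

lemma partition_same:
  assumes "partition_on A P" "t1 \<in> P" "t2 \<in> P" "x \<in> t1" "x \<in> t2"
  shows "t1 = t2"
  using assms unfolding partition_on_def pairwise_def disjnt_def by blast

lemma ci_tiling_Un:
  assumes ci: "ci_tiling R' h' L T'" and E: "partition_on (\<Union>E) E" and dis: "\<Union>E \<inter> R' = {}"
    and ballot: "\<And>tau. tau \<in> E \<Longrightarrow> \<exists>n n'. ballot_tile tau n n'"
    and anchored: "\<And>tau c. tau \<in> E \<Longrightarrow> 1 \<le> snd (tile_len tau) \<Longrightarrow> c \<in> tau \<Longrightarrow>
      \<forall>c'\<in>tau. fst c' \<le> fst c \<Longrightarrow> fst c = L"
    and rest_E: "\<And>tau. tau \<in> E \<Longrightarrow> rests_on h tau \<or> (\<exists>t'\<in>E. shift_down tau \<subseteq> t')"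
    and rest_T': "\<And>tau. tau \<in> T' \<Longrightarrow> rests_on h' tau \<Longrightarrow> rests_on h tau \<or> (\<exists>t'\<in>E. shift_down tau \<subseteq> t')"
  shows "ci_tiling (\<Union>E \<union> R') h L (E \<union> T')"
proof (rule ci_tiling_intro)
  note c = ci_tiling_parts[OF ci]
  show "partition_on (\<Union>E \<union> R') (E \<union> T')" by (rule partition_on_Un[OF E c(1) dis])
  fix tau assume tau: "tau \<in> E \<union> T'"
  show "\<exists>n n'. ballot_tile tau n n'" using tau c(2) ballot by blast
  show "\<And>c'. 1 \<le> snd (tile_len tau) \<Longrightarrow> c' \<in> tau \<Longrightarrow> \<forall>c''\<in>tau. fst c'' \<le> fst c' \<Longrightarrow> fst c' = L"
    using tau c(3) anchored by blast
  show "rests_on h tau \<or> (\<exists>tau'\<in>E \<union> T'. shift_down tau \<subseteq> tau')"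
  proof (cases "tau \<in> E")
    case True
    then show ?thesis using rest_E by blast
  next
    case False
    then have tT': "tau \<in> T'" using tau by simp
    from c(4)[OF tT'] show ?thesis
    proof
      assume "rests_on h' tau"
      then show ?thesis using rest_T'[OF tT'] by blast
    qed blast
  qed
qed

lemma ci_tiling_Diff:
  assumes ci: "ci_tiling (\<Union>E \<union> R') h L T" and sub: "E \<subseteq> T" and dis: "\<Union>E \<inter> R' = {}"
    and rest: "\<And>tau. tau \<subseteq> R' \<Longrightarrow> rests_on h tau \<Longrightarrow> rests_on h' tau"
    and covered: "\<And>tau t'. tau \<in> T - E \<Longrightarrow> tau \<noteq> {} \<Longrightarrow> t' \<in> E \<Longrightarrow> shift_down tau \<subseteq> t' \<Longrightarrow>
      rests_on h' tau"
  shows "ci_tiling R' h' L (T - E)"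
proof (rule ci_tiling_intro)
  note c = ci_tiling_parts[OF ci]
  have "partition_on ((\<Union>E \<union> R') - \<Union>E) (T - E)" by (rule partition_on_Diff[OF c(1) sub])
  moreover have "(\<Union>E \<union> R') - \<Union>E = R'" using dis by blast
  ultimately show P: "partition_on R' (T - E)" by simp
  fix tau assume tau: "tau \<in> T - E"
  then have tau_R': "tau \<subseteq> R'" and "tau \<noteq> {}" using P by (auto simp: partition_on_def)
  show "\<exists>n n'. ballot_tile tau n n'" using c(2) tau by blast
  show "\<And>c'. 1 \<le> snd (tile_len tau) \<Longrightarrow> c' \<in> tau \<Longrightarrow> \<forall>c''\<in>tau. fst c'' \<le> fst c' \<Longrightarrow> fst c' = L"
    using c(3) tau by blast
  have tT: "tau \<in> T" using tau by simp
  from c(4)[OF tT] show "rests_on h' tau \<or> (\<exists>tau'\<in>T - E. shift_down tau \<subseteq> tau')"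
  proof
    assume "rests_on h tau"
    then show ?thesis using rest[OF tau_R'] by blast
  next
    assume "\<exists>t'\<in>T. shift_down tau \<subseteq> t'"
    then obtain t' where t': "t' \<in> T" "shift_down tau \<subseteq> t'" by blast
    show ?thesis
    proof (cases "t' \<in> E")
      case True
      then show ?thesis using covered[OF tau \<open>tau \<noteq> {}\<close> True t'(2)] by blast
    qed (use t' in blast)
  qed
qed

definition tile_weight :: "box set \<Rightarrow> nat" where
  "tile_weight tau = tile_area tau + tile_tiles tau"

lemma tile_weight_single [simp]: "tile_weight {p} = 2"
  by (simp add: tile_weight_def tile_area_def tile_tiles_def)

lemma art_Un:
  assumes "finite E" "finite T" "E \<inter> T = {}" "(\<Sum>tau\<in>E. tile_weight tau) = 2 * k"
  shows "art (E \<union> T) = k + art T"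
  using assms by (simp add: art_def tile_weight_def[symmetric] sum.union_disjoint)

lemma typeBI_Un:
  assumes fin: "finite E" "finite T" and dis: "E \<inter> T = {}"
    and E1: "\<forall>tau\<in>E. \<not> (even (snd (tile_len tau)) \<and> snd (tile_len tau) \<ge> 2)"
    and E2: "\<forall>n n'. odd n' \<longrightarrow> even (card {tau\<in>E. tile_len tau = (n, n')})"
  shows "typeBI (E \<union> T) \<longleftrightarrow> typeBI T"
proof -
  have c: "card {tau\<in>E \<union> T. tile_len tau = (n, n')} = card {tau\<in>E. tile_len tau = (n, n')} + card {tau\<in>T. tile_len tau = (n, n')}" for n n'
  proof -
    have "{tau\<in>E \<union> T. tile_len tau = (n, n')} = {tau\<in>E. tile_len tau = (n, n')} \<union> {tau\<in>T. tile_len tau = (n, n')}" by auto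
    then show ?thesis using fin dis by (simp add: card_Un_disjoint disjoint_iff)
  qed
  show ?thesis
  proof
    assume t: "typeBI (E \<union> T)"
    show "typeBI T" unfolding typeBI_def
    proof (intro conjI allI impI ballI)
      fix tau assume "tau \<in> T" then show "\<not> (even (snd (tile_len tau)) \<and> 2 \<le> snd (tile_len tau))"
        using t by (auto simp: typeBI_def)
    next
      fix n n' :: nat assume "odd n'"
      then have "even (card {tau\<in>E \<union> T. tile_len tau = (n, n')})" "even (card {tau\<in>E. tile_len tau = (n, n')})"
        using t E2 by (auto simp: typeBI_def)
      then show "even (card {tau\<in>T. tile_len tau = (n, n')})" unfolding c by simp
    qed
  next
    assume t: "typeBI T"
    show "typeBI (E \<union> T)" unfolding typeBI_def
    proof (intro conjI allI impI ballI)
      fix tau assume "tau \<in> E \<union> T" then show "\<not> (even (snd (tile_len tau)) \<and> 2 \<le> snd (tile_len tau))"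
        using t E1 by (auto simp: typeBI_def)
    next
      fix n n' :: nat assume "odd n'"
      then have "even (card {tau\<in>T. tile_len tau = (n, n')})" "even (card {tau\<in>E. tile_len tau = (n, n')})"
        using t E2 by (auto simp: typeBI_def)
      then show "even (card {tau\<in>E \<union> T. tile_len tau = (n, n')})" unfolding c by simp
    qed
  qed
qed

lemma sum_art_glue:
  assumes A: "A = (\<lambda>(mu1, T1). (s # mu1, E \<union> shift_tiling 1 d T1)) ` B"
    and B: "\<And>mu1 T1. (mu1, T1) \<in> B \<Longrightarrow> finite T1 \<and> E \<inter> shift_tiling 1 d T1 = {}"
    and E: "finite E" "(\<Sum>tau\<in>E. tile_weight tau) = 2 * k"
  shows "(\<Sum>(mu, T)\<in>A. monom (1::int) (art T)) = monom 1 k * (\<Sum>(mu, T)\<in>B. monom 1 (art T))"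
proof -
  let ?g = "\<lambda>(mu1, T1). (s # mu1, E \<union> shift_tiling 1 d T1)"
  have inj: "inj_on ?g B"
  proof (rule inj_onI)
    fix x y assume "x \<in> B" "y \<in> B" "?g x = ?g y"
    moreover obtain mu1 T1 mu2 T2 where "x = (mu1, T1)" "y = (mu2, T2)" by fastforce
    ultimately have "mu1 = mu2" "E \<union> shift_tiling 1 d T1 = E \<union> shift_tiling 1 d T2"
      "E \<inter> shift_tiling 1 d T1 = {}" "E \<inter> shift_tiling 1 d T2 = {}" using B by auto
    then have "mu1 = mu2" "shift_tiling 1 d T1 = shift_tiling 1 d T2" by blast+
    then show "x = y" using \<open>x = (mu1, T1)\<close> \<open>y = (mu2, T2)\<close> inj_shift_tiling[THEN injD] by blast
  qed
  have "(\<Sum>(mu, T)\<in>A. monom (1::int) (art T))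
      = (\<Sum>(mu1, T1)\<in>B. monom 1 (art (E \<union> shift_tiling 1 d T1)))"
    unfolding A by (subst sum.reindex[OF inj]) (simp add: case_prod_beta)
  also have "\<dots> = (\<Sum>(mu1, T1)\<in>B. monom 1 k * monom 1 (art T1))"
    by (rule sum.cong) (use art_Un[OF E(1) _ _ E(2)] B in \<open>auto simp: mult_monom\<close>)
  finally show ?thesis by (simp add: sum_distrib_left case_prod_beta)
qed

section \<open>Tiles resting on a boundary\<close>

lemma tile_at_cong: "(\<And>i. i \<le> k \<Longrightarrow> f i = g i) \<Longrightarrow> tile_at a0 f k = tile_at a0 g k"
  unfolding tile_at_def by (rule image_cong) auto

lemma ci_tiling_tile:
  assumes "ci_tiling R h L T" "tau \<in> T"
  shows "\<exists>a0 f. tau = tile_at a0 f (2 * fst (tile_len tau) + snd (tile_len tau)) \<and>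
           ballot_profile f (fst (tile_len tau)) (snd (tile_len tau))"
proof -
  obtain n n' where "ballot_tile tau n n'" using assms by (auto simp: ci_tiling_def)
  then have "tile_len tau = (n, n')" "ballot_tile tau n n'" by (auto simp: tile_len_eq)
  then show ?thesis unfolding ballot_tile_iff by simp
qed

lemma ballot_profile_ge: "ballot_profile f n n' \<Longrightarrow> i \<le> 2*n+n' \<Longrightarrow> f 0 \<le> f i"
  unfolding ballot_profile_def by blast

lemma ballot_profile_2n: "ballot_profile f n n' \<Longrightarrow> f (2*n) = f 0"
  unfolding ballot_profile_def by blast

lemma resting_tile_on_descent:
  assumes tau: "tau = tile_at a0 f k" and b: "ballot_profile f n n'" and k: "k = 2*n+n'"
    and on: "\<And>i. i \<le> k \<Longrightarrow> f i = H (a0 + int i) + 1"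
    and a: "a0 \<le> a" "a \<le> a0 + int k"
    and desc_left: "\<And>x. a0 \<le> x \<Longrightarrow> x < a \<Longrightarrow> H a < H x"
    and desc_right: "a < a0 + int k \<Longrightarrow> H (a + 1) < H a"
  shows "a0 = a \<and> k = 0"
proof -
  have "a0 = a"
  proof (rule ccontr)
    assume "a0 \<noteq> a"
    then have "a0 < a" using a by simp
    have "f 0 \<le> f (nat (a - a0))" using ballot_profile_ge[OF b, of "nat (a - a0)"] a k by simp
    moreover have "f 0 = H a0 + 1" using on[of 0] by simp
    moreover have "f (nat (a - a0)) = H a + 1" using on[of "nat (a - a0)"] a by simp
    ultimately show False using desc_left[of a0] \<open>a0 < a\<close> by simp
  qed
  moreover have "k = 0"
  proof (rule ccontr)
    assume "k \<noteq> 0"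
    then have "f 0 \<le> f 1" using ballot_profile_ge[OF b, of 1] k by linarith
    moreover have "f 0 = H a + 1" using on[of 0] \<open>a0 = a\<close> by simp
    moreover have "f 1 = H (a + 1) + 1" using on[of 1] \<open>a0 = a\<close> \<open>k \<noteq> 0\<close> by simp
    ultimately show False using desc_right \<open>a0 = a\<close> \<open>k \<noteq> 0\<close> by simp
  qed
  ultimately show ?thesis by simp
qed

lemma ballot_profile_linear:
  assumes b: "ballot_profile f n n'" and inc: "\<And>i. i \<le> 2*n+n' \<Longrightarrow> f i = f 0 + int i"
  shows "n = 0"
  using ballot_profile_2n[OF b] inc[of "2*n"] by simp

lemma resting_profile:
  assumes "rests_on H (tile_at a0 f k)" "\<forall>p\<in>tile_at a0 f k. H (fst p) < snd p" "i \<le> k"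
  shows "f i = H (a0 + int i) + 1"
proof -
  have "(a0 + int i, f i) \<in> tile_at a0 f k" using assms(3) by (rule tile_at_memI)
  then show ?thesis using assms(1,2) by fastforce
qed

lemma resting_tileE:
  assumes ci: "ci_tiling R H L T" and above: "\<And>p. p \<in> R \<Longrightarrow> H (fst p) < snd p"
    and tT: "tau \<in> T" and bot: "rests_on H tau"
  obtains a0 f n n' where "tau = tile_at a0 f (2*n+n')" "ballot_profile f n n'" "tile_len tau = (n, n')"
    "\<And>i. i \<le> 2*n+n' \<Longrightarrow> f i = H (a0 + int i) + 1"
proof -
  obtain a0 f n n' where tf: "tau = tile_at a0 f (2*n+n')" "ballot_profile f n n'" "tile_len tau = (n, n')"
    using ci_tiling_tile[OF ci tT] by (metis prod.collapse)
  have ab: "\<forall>p\<in>tile_at a0 f (2*n+n'). H (fst p) < snd p"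
    using above ci_tiling_subset[OF ci tT] tf(1) by blast
  have rs: "rests_on H (tile_at a0 f (2*n+n'))" using bot tf(1) by simp
  show ?thesis by (rule that[OF tf]) (rule resting_profile[OF rs ab])
qed

section \<open>Pairs whose upper path starts like the lower one\<close>

definition sgn_step :: "bool \<Rightarrow> int" where
  "sgn_step s = (if s then 1 else -1)"

lemma region_Cons:
  assumes "length mu1 = length lam1"
  shows "region (s # lam1) (s # mu1) = shift_tile 1 (sgn_step s) (region lam1 mu1)"
proof (intro set_eqI)
  fix p :: box
  obtain a b where p: "p = (a, b)" by fastforce
  have odd: "odd (sgn_step s)" by (simp add: sgn_step_def)
  show "p \<in> region (s # lam1) (s # mu1) \<longleftrightarrow> p \<in> shift_tile 1 (sgn_step s) (region lam1 mu1)"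
  proof (cases "a \<ge> 2")
    case True
    have h: "height (s # q) (nat a) = sgn_step s + height q (nat (a - 1))" for q
      using height_Cons_nat[of a s q] True by (simp add: sgn_step_def)
    have "odd (a + b) \<longleftrightarrow> odd (a - 1 + (b - sgn_step s))" using odd by presburger
    then show ?thesis using True unfolding p region_def by (auto simp: h)
  next
    case False
    then have "\<not> (1 \<le> a - 1)" by simp
    have "p \<notin> region (s # lam1) (s # mu1)"
    proof (cases "a = 1")
      case True
      then show ?thesis unfolding p region_def by (simp add: sgn_step_def)
    next
      case False
      then have "\<not> 1 \<le> a" using \<open>\<not> 2 \<le> a\<close> by simp
      then show ?thesis unfolding p region_def by simp
    qed
    moreover have "p \<notin> shift_tile 1 (sgn_step s) (region lam1 mu1)"
      using \<open>\<not> (1 \<le> a - 1)\<close> unfolding p region_def by simp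
    ultimately show ?thesis by simp
  qed
qed

lemma weakly_above_Cons: "weakly_above (s # mu1) (s # lam1) \<longleftrightarrow> weakly_above mu1 lam1"
proof
  assume w: "weakly_above (s # mu1) (s # lam1)"
  have "height lam1 x \<le> height mu1 x" if "x \<le> length lam1" for x
    using w that unfolding weakly_above_def by (metis height_Cons_Suc Suc_le_mono add_le_cancel_left length_Cons)
  then show "weakly_above mu1 lam1" using w by (simp add: weakly_above_def)
next
  assume w: "weakly_above mu1 lam1"
  have "height (s # lam1) x \<le> height (s # mu1) x" if "x \<le> Suc (length lam1)" for x
    using w that unfolding weakly_above_def by (cases x) auto
  then show "weakly_above (s # mu1) (s # lam1)" using w by (simp add: weakly_above_def)
qed

lemma ci_tiling_Cons:
  assumes "length mu1 = length lam1"
  shows "ci_tiling (region (s # lam1) (s # mu1)) (\<lambda>a. height (s # lam1) (nat a)) (int (length (s # lam1))) (shift_tiling 1 (sgn_step s) T)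
     \<longleftrightarrow> ci_tiling (region lam1 mu1) (\<lambda>a. height lam1 (nat a)) (int (length lam1)) T"
proof -
  have "ci_tiling (region (s # lam1) (s # mu1)) (\<lambda>a. height (s # lam1) (nat a)) (int (length (s # lam1))) (shift_tiling 1 (sgn_step s) T)
     \<longleftrightarrow> ci_tiling (shift_tile 1 (sgn_step s) (region lam1 mu1)) (\<lambda>a. height lam1 (nat (a - 1)) + sgn_step s) (int (length lam1) + 1) (shift_tiling 1 (sgn_step s) T)"
  proof -
    have "height (s # lam1) (nat (fst p)) = height lam1 (nat (fst p - 1)) + sgn_step s"
      if "p \<in> region (s # lam1) (s # mu1)" for p
    proof -
      have "fst p \<ge> 1" using that unfolding region_def by auto
      then show ?thesis using height_Cons_nat[of "fst p" s lam1] by (simp add: sgn_step_def)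
    qed
    then have "ci_tiling (region (s # lam1) (s # mu1)) (\<lambda>a. height (s # lam1) (nat a)) (int (length (s # lam1))) (shift_tiling 1 (sgn_step s) T)
     \<longleftrightarrow> ci_tiling (region (s # lam1) (s # mu1)) (\<lambda>a. height lam1 (nat (a - 1)) + sgn_step s) (int (length (s # lam1))) (shift_tiling 1 (sgn_step s) T)"
      by (intro ci_tiling_cong) blast
    moreover have "int (length (s # lam1)) = int (length lam1) + 1" by simp
    ultimately show ?thesis unfolding region_Cons[OF assms] by (simp add: add.commute)
  qed
  also have "\<dots> \<longleftrightarrow> ci_tiling (region lam1 mu1) (\<lambda>a. height lam1 (nat a)) (int (length lam1)) T"
    using ci_tiling_shift_iff[of 1 "sgn_step s" "region lam1 mu1" "\<lambda>a. height lam1 (nat a)"] by simp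
  finally show ?thesis .
qed

lemma bi_tilings_Cons:
  "(s # mu1, shift_tiling 1 (sgn_step s) T) \<in> bi_tilings (s # lam1) \<longleftrightarrow> (mu1, T) \<in> bi_tilings lam1"
proof -
  have "length mu1 = length lam1" if "weakly_above mu1 lam1" using that by (simp add: weakly_above_def)
  then show ?thesis unfolding bi_tilings_iff weakly_above_Cons using ci_tiling_Cons by auto
qed

lemma sum_bi_tilings_Cons_same:
  "(\<Sum>(mu, T) \<in> {(mu, T) \<in> bi_tilings (s # lam1). hd mu = s}. monom (1::int) (art T))
   = (\<Sum>(mu, T) \<in> bi_tilings lam1. monom 1 (art T))"
proof -
  have "{(mu, T) \<in> bi_tilings (s # lam1). hd mu = s}
      = (\<lambda>(mu1, T1). (s # mu1, {} \<union> shift_tiling 1 (sgn_step s) T1)) ` bi_tilings lam1"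
  proof (intro set_eqI iffI)
    fix x assume "x \<in> {(mu, T) \<in> bi_tilings (s # lam1). hd mu = s}"
    then obtain mu T where x: "x = (mu, T)" "(mu, T) \<in> bi_tilings (s # lam1)" "hd mu = s" by auto
    then have "length mu = Suc (length lam1)" by (simp add: bi_tilings_def weakly_above_def)
    then obtain mu1 where mu: "mu = s # mu1" using x(3) by (cases mu) auto
    have "(s # mu1, shift_tiling 1 (sgn_step s) (shift_tiling (-1) (- sgn_step s) T)) \<in> bi_tilings (s # lam1)"
      using x mu by simp
    then have "(mu1, shift_tiling (-1) (- sgn_step s) T) \<in> bi_tilings lam1" by (simp only: bi_tilings_Cons)
    then show "x \<in> (\<lambda>(mu1, T1). (s # mu1, {} \<union> shift_tiling 1 (sgn_step s) T1)) ` bi_tilings lam1"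
      using x mu by (auto intro!: image_eqI[of _ _ "(mu1, shift_tiling (-1) (- sgn_step s) T)"])
  qed (auto simp: bi_tilings_Cons)
  then show ?thesis using sum_art_glue[of _ s "{}" "sgn_step s" "bi_tilings lam1" 0]
    by (simp add: finite_of_bi_tilings)
qed

section \<open>Tiles over the lower path \<open>D^N U^M\<close>\<close>

lemma mem_region_lamMN:
  assumes "length mu = M + N"
  shows "(a, b) \<in> region (lamMN M N) mu \<longleftrightarrow> odd (a + b) \<and> 1 \<le> a \<and> a \<le> int (M + N) \<and>
      lam_height N a < b \<and> b < height mu (nat a)"
  unfolding region_def using height_lamMN_eq_lam_height[of a M N] by auto

lemma mem_region_lamMN_Cons_True:
  assumes "length mu1 + 1 = M + N"
  shows "(a, b) \<in> region (lamMN M N) (True # mu1) \<longleftrightarrow> odd (a + b) \<and> 1 \<le> a \<and> a \<le> int (M + N) \<and>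
      lam_height N a < b \<and> b < 1 + height mu1 (nat (a - 1))"
proof -
  have "1 \<le> a \<Longrightarrow> height (True # mu1) (nat a) = 1 + height mu1 (nat (a - 1))"
    using height_Cons_nat[of a True mu1] by simp
  then show ?thesis using mem_region_lamMN[of "True # mu1" M N a b] assms by auto
qed

lemma ci_tiling_lamMN_iff:
  "ci_tiling (region (lamMN M N) mu) (\<lambda>a. height (lamMN M N) (nat a)) L T \<longleftrightarrow> ci_tiling (region (lamMN M N) mu) (lam_height N) L T"
proof (rule ci_tiling_cong)
  fix p assume "p \<in> region (lamMN M N) mu"
  then have "0 \<le> fst p" "fst p \<le> int (M + N)" unfolding region_def by auto
  then show "height (lamMN M N) (nat (fst p)) = lam_height N (fst p)" by (rule height_lamMN_eq_lam_height)
qed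

lemma bi_tilings_lamMN_iff: "(mu, T) \<in> bi_tilings (lamMN M N) \<longleftrightarrow> weakly_above mu (lamMN M N) \<and>
   ci_tiling (region (lamMN M N) mu) (lam_height N) (int (M + N)) T \<and> typeBI T"
  unfolding bi_tilings_iff ci_tiling_lamMN_iff by simp

definition left_singles :: "nat \<Rightarrow> box set set" where
  "left_singles K = (\<lambda>a. {(a, 1 - a)}) ` {1..int K}"

lemma finite_left_singles[simp]: "finite (left_singles K)"
  by (simp add: left_singles_def)

lemma Union_left_singles: "\<Union>(left_singles K) = {(a, b). 1 \<le> a \<and> a \<le> int K \<and> b = 1 - a}"
  by (auto simp: left_singles_def)

lemma sum_tile_weight_left_singles: "(\<Sum>tau\<in>left_singles K. tile_weight tau) = 2 * K"
proof -
  have "(\<Sum>tau\<in>left_singles K. tile_weight tau) = (\<Sum>a\<in>{1..int K}. tile_weight {(a, 1 - a)})"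
    unfolding left_singles_def by (rule sum.reindex_cong[where l = "\<lambda>a. {(a, 1 - a)}"]) (auto simp: inj_on_def)
  then show ?thesis by simp
qed

lemma tile_len_left_singles: "tau \<in> left_singles K \<Longrightarrow> tile_len tau = (0, 0)"
  by (auto simp: left_singles_def)

lemma partition_left_singles: "partition_on (\<Union>(left_singles K)) (left_singles K)"
  by (rule partition_onI) (auto simp: left_singles_def disjnt_def)

abbreviation valley_box :: "nat \<Rightarrow> box" where
  "valley_box N \<equiv> (int N, 1 - int N)"

text \<open>
  \<open>anchor_line M N 1\<close> is the straight tile of length \<open>(0, M)\<close> rising from the valley box;
  \<open>anchor_line M N 3\<close> is its translate by \<open>(0, 2)\<close>.
\<close>
definition anchor_line :: "nat \<Rightarrow> nat \<Rightarrow> int \<Rightarrow> box set" where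
  "anchor_line M N c = tile_at (int N) (\<lambda>i. c - int N + int i) M"

lemma ballot_profile_line: "ballot_profile (\<lambda>i. c + int i) 0 M"
  unfolding ballot_profile_def by auto

lemma ballot_anchor_line: "ballot_tile (anchor_line M N c) 0 M"
  unfolding ballot_tile_iff anchor_line_def
  by (intro exI[of _ "int N"] exI[of _ "\<lambda>i. c - int N + int i"]) (simp add: ballot_profile_line[of "c - int N" M])

lemma tile_len_anchor_line[simp]: "tile_len (anchor_line M N c) = (0, M)"
  by (rule tile_len_eq[OF ballot_anchor_line])

lemma mem_anchor_line: "(a, b) \<in> anchor_line M N c \<longleftrightarrow> int N \<le> a \<and> a \<le> int N + int M \<and> b = c + a - 2 * int N"
  unfolding anchor_line_def mem_tile_at by auto

lemma shift_tile_anchor_line: "shift_tile 0 d (anchor_line M N c) = anchor_line M N (c + d)"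
  unfolding anchor_line_def shift_tile_tile_at by (simp add: algebra_simps)

lemma card_anchor_line: "card (anchor_line M N c) = Suc M"
  by (simp add: anchor_line_def card_tile_at)

lemma tile_weight_anchor_line: "M \<ge> 1 \<Longrightarrow> tile_weight (anchor_line M N c) = M + 1"
  by (simp add: tile_weight_def tile_area_def tile_tiles_def)

section \<open>Tilings whose upper path starts with an up step\<close>

lemma valley_box_mem_anchor_line: "valley_box N \<in> anchor_line M N 1"
  by (simp add: mem_anchor_line)

locale up_start =
  fixes M N :: nat and mu1 :: path and T :: "box set set"
  assumes N1: "1 \<le> N" and M1: "1 \<le> M"
    and it: "(True # mu1, T) \<in> bi_tilings (lamMN M N)"
begin

abbreviation "R \<equiv> region (lamMN M N) (True # mu1)"
abbreviation "h \<equiv> \<lambda>a. height (lamMN M N) (nat a)"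

lemma length_mu1: "length mu1 + 1 = M + N"
  using it by (simp add: bi_tilings_def weakly_above_def)

lemma ci_tiling_T: "ci_tiling R h (int (M + N)) T"
  using it by (simp add: bi_tilings_iff)

lemma typeBI_T: "typeBI T"
  using it by (simp add: bi_tilings_iff)

lemma partition_T: "partition_on R T"
  using ci_tiling_T by (simp add: ci_tiling_def)

lemma finite_T: "finite T"
proof -
  have "finite R" using region_bound[of "lamMN M N" "True # mu1"] by (rule finite_subset) simp
  then show ?thesis using partition_T finite_elements by blast
qed

lemma mem_R: "(a, b) \<in> R \<longleftrightarrow> odd (a + b) \<and> 1 \<le> a \<and> a \<le> int (M + N) \<and>
      lam_height N a < b \<and> b < 1 + height mu1 (nat (a - 1))"
  using mem_region_lamMN_Cons_True[OF length_mu1] .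

lemma tile_subset_R: "tau \<in> T \<Longrightarrow> tau \<subseteq> R"
  using ci_tiling_subset[OF ci_tiling_T] .

lemma tile_nonempty: "tau \<in> T \<Longrightarrow> tau \<noteq> {}"
  using partition_T by (auto simp: partition_on_def)

lemma rests_or_covered: "tau \<in> T \<Longrightarrow> rests_on h tau \<or> (\<exists>tau'\<in>T. shift_down tau \<subseteq> tau')"
  using ci_tiling_T by (simp add: ci_tiling_def)

lemma resting_box_height:
  assumes "tau \<in> T" "rests_on h tau" "(a, b) \<in> tau"
  shows "b = lam_height N a + 1"
proof -
  have r: "(a, b) \<in> R" using assms tile_subset_R by blast
  then have "h a = lam_height N a" using height_lamMN_eq_lam_height[of a M N] by (simp add: mem_R)
  then show ?thesis using assms(2,3) r mem_R by force
qed

lemma left_single_box_mem_R: "1 \<le> a \<Longrightarrow> a \<le> int N \<Longrightarrow> (a, 1 - a) \<in> R"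
proof -
  assume a: "1 \<le> a" "a \<le> int N"
  have "- int (nat (a - 1)) \<le> height mu1 (nat (a - 1))" by (rule height_ge)
  then show ?thesis unfolding mem_R using a by (simp add: lam_height_def)
qed

lemma tile_at_T:
  assumes "tau \<in> T"
  obtains a0 f n n' where "tau = tile_at a0 f (2*n+n')" "ballot_profile f n n'" "tile_len tau = (n, n')"
  using ci_tiling_tile[OF ci_tiling_T assms] by (metis prod.collapse)

lemma resting_tile_profile:
  assumes "tau \<in> T" "rests_on h tau"
  obtains a0 f n n' where "tau = tile_at a0 f (2*n+n')" "ballot_profile f n n'" "tile_len tau = (n, n')"
    "\<And>i. i \<le> 2*n+n' \<Longrightarrow> f i = lam_height N (a0 + int i) + 1"
proof -
  obtain a0 f n n' where tf: "tau = tile_at a0 f (2*n+n')" "ballot_profile f n n'" "tile_len tau = (n, n')"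
    using tile_at_T[OF assms(1)] by metis
  have "f i = lam_height N (a0 + int i) + 1" if "i \<le> 2*n+n'" for i
  proof -
    have "(a0 + int i, f i) \<in> tau" unfolding tf mem_tile_at using that by simp
    then show ?thesis using resting_box_height[OF assms] by blast
  qed
  then show ?thesis using that tf by blast
qed

text \<open>
  A tile meeting the descent either rests on it, and is then a single box, or covers the
  translate by \<open>(0, -2)\<close> of a tile that is a single box by induction on \<open>a + b\<close>.
\<close>
lemma left_tile_single:
  assumes "tau \<in> T" "(a, b) \<in> tau" "a < int N"
  shows "tau = {(a, b)}"
  using assms
proof (induction "nat (a + b)" arbitrary: tau a b rule: less_induct)
  case less
  from rests_or_covered[OF less.prems(1)] show ?case
  proof
    assume bot: "rests_on h tau"
    obtain a0 f n n' where tf: "tau = tile_at a0 f (2*n+n')" "ballot_profile f n n'"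
      and on: "\<And>i. i \<le> 2*n+n' \<Longrightarrow> f i = lam_height N (a0 + int i) + 1"
      using resting_tile_profile[OF less.prems(1) bot] by metis
    have a_in: "a0 \<le> a" "a \<le> a0 + int (2*n+n')" using less.prems(2) unfolding tf mem_tile_at by auto
    have "a0 = a \<and> 2*n+n' = 0"
    proof (rule resting_tile_on_descent[OF tf(1) tf(2) refl on a_in])
      fix x assume "a0 \<le> x" "x < a"
      then show "lam_height N a < lam_height N x" using less.prems(3) by (simp add: lam_height_def)
    next
      show "lam_height N (a + 1) < lam_height N a" using less.prems(3) by (simp add: lam_height_def)
    qed simp
    then have "tau = {(a, f 0)}" using tf(1) by (simp add: tile_at_def)
    then show ?thesis using less.prems(2) by simp
  next
    assume "\<exists>tau'\<in>T. shift_down tau \<subseteq> tau'"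
    then obtain tau' where tau': "tau' \<in> T" "shift_down tau \<subseteq> tau'" by blast
    have m: "(a, b - 2) \<in> tau'" using shift_down_memD[OF tau'(2) less.prems(2)] .
    then have "(a, b - 2) \<in> R" using tau' tile_subset_R by blast
    then have "nat (a + (b - 2)) < nat (a + b)" using less.prems(3) by (simp add: mem_R lam_height_def)
    then have "tau' = {(a, b - 2)}" using less.hyps less.prems(3) tau'(1) m by blast
    then show ?thesis using shift_down_subset_singleton[of tau a "b - 2"] tau'(2) tile_nonempty[OF less.prems(1)] by simp
  qed
qed

lemma covering_tile: "p \<in> R \<Longrightarrow> \<exists>tau\<in>T. p \<in> tau"
  using partition_T by (auto simp: partition_on_def)

lemma left_singles_subset_T: "left_singles (N - 1) \<subseteq> T"
proof
  fix t assume "t \<in> left_singles (N - 1)"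
  then obtain a where a: "t = {(a, 1 - a)}" "1 \<le> a" "a \<le> int (N - 1)" by (auto simp: left_singles_def)
  then have "(a, 1 - a) \<in> R" using left_single_box_mem_R N1 by simp
  then obtain tau where "tau \<in> T" "(a, 1 - a) \<in> tau" using covering_tile by blast
  moreover have "a < int N" using a N1 by simp
  ultimately show "t \<in> T" using left_tile_single a(1) by metis
qed

lemma valley_tile_cases:
  assumes t: "tau \<in> T" "valley_box N \<in> tau"
  shows "tau = {valley_box N} \<or> tau = anchor_line M N 1"
proof -
  have bot: "rests_on h tau"
  proof (rule ccontr)
    assume "\<not> ?thesis"
    then obtain tau' where "tau' \<in> T" "shift_down tau \<subseteq> tau'" using rests_or_covered[OF t(1)] by blast
    then have "(int N, 1 - int N - 2) \<in> R" using shift_down_memD[OF _ t(2)] tile_subset_R by blast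
    then show False by (simp add: mem_R lam_height_def)
  qed
  obtain a0 f n n' where tf: "tau = tile_at a0 f (2*n+n')" "ballot_profile f n n'" "tile_len tau = (n, n')"
    and on: "\<And>i. i \<le> 2*n+n' \<Longrightarrow> f i = lam_height N (a0 + int i) + 1"
    using resting_tile_profile[OF t(1) bot] by metis
  have a_in: "a0 \<le> int N" "int N \<le> a0 + int (2*n+n')" using t(2) unfolding tf mem_tile_at by auto
  have a0: "a0 = int N"
  proof (rule ccontr)
    assume "a0 \<noteq> int N"
    then have "a0 < int N" using a_in by simp
    have "f 0 \<le> f (nat (int N - a0))" using ballot_profile_ge[OF tf(2), of "nat (int N - a0)"] a_in by simp
    then show False using on[of 0] on[of "nat (int N - a0)"] a_in \<open>a0 < int N\<close> by (simp add: lam_height_def)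
  qed
  have fi: "f i = 1 - int N + int i" if "i \<le> 2*n+n'" for i
    using on[OF that] a0 by (simp add: lam_height_def)
  have n0: "n = 0" using ballot_profile_linear[OF tf(2)] fi by simp
  show ?thesis
  proof (cases "n' = 0")
    case True
    then show ?thesis using tf(1) a0 n0 fi[of 0] by (simp add: tile_at_def)
  next
    case False
    let ?c = "(int N + int n', f n')"
    have "?c \<in> tau" "\<forall>c'\<in>tau. fst c' \<le> fst ?c" unfolding tf using a0 n0 by (auto simp: mem_tile_at')
    then have "fst ?c = int (M + N)" using ci_tiling_T t(1) False tf(3) unfolding ci_tiling_def by auto
    then have "tau = tile_at (int N) (\<lambda>i. 1 - int N + int i) M"
      using tf(1) a0 n0 fi tile_at_cong[of M f "\<lambda>i. 1 - int N + int i" "int N"] by simp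
    then show ?thesis by (simp add: anchor_line_def)
  qed
qed

lemma odd_if_valley_line: "anchor_line M N 1 \<in> T \<Longrightarrow> odd M"
proof -
  assume A: "anchor_line M N 1 \<in> T"
  have "\<forall>tau\<in>T. \<not> (even (snd (tile_len tau)) \<and> snd (tile_len tau) \<ge> 2)" using typeBI_T by (simp add: typeBI_def)
  then have "\<not> (even M \<and> M \<ge> 2)" using A by fastforce
  then show "odd M" using M1 by presburger
qed

lemma shift_down_line_in_T:
  assumes D: "tile_at (int N) g M \<in> T" and g0: "g 0 \<noteq> 1 - int N"
  shows "tile_at (int N) (\<lambda>i. g i - 2) M \<in> T"
proof -
  let ?D = "tile_at (int N) g M"
  have m: "(int N, g 0) \<in> ?D" and mM: "(int N + int M, g M) \<in> ?D" by (simp_all add: mem_tile_at)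
  have "\<not> rests_on h ?D"
  proof
    assume "rests_on h ?D"
    from resting_box_height[OF D this m] g0 show False by (simp add: lam_height_def)
  qed
  then obtain t' where t': "t' \<in> T" "shift_down ?D \<subseteq> t'" using rests_or_covered[OF D] by blast
  have m1: "(int N, g 0 - 2) \<in> t'" and m2: "(int N + int M, g M - 2) \<in> t'"
    using shift_down_memD[OF t'(2) m] shift_down_memD[OF t'(2) mM] by simp_all
  obtain a0 f n n' where tf: "t' = tile_at a0 f (2*n+n')" "ballot_profile f n n'"
    using tile_at_T[OF t'(1)] by metis
  have "(a0, f 0) \<in> t'" unfolding tf mem_tile_at by simp
  then have "\<not> a0 < int N" using left_tile_single[OF t'(1)] m1 m2 M1 by fastforce
  moreover have "a0 \<le> int N" using m1 unfolding tf mem_tile_at by simp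
  ultimately have a0: "a0 = int N" by simp
  have "(a0 + int (2*n+n'), f (2*n+n')) \<in> t'" unfolding tf by (rule tile_at_memI) simp
  then have "a0 + int (2*n+n') \<le> int (M + N)" using tile_subset_R[OF t'(1)] mem_R by blast
  moreover have "int N + int M \<le> a0 + int (2*n+n')" using m2 unfolding tf mem_tile_at by simp
  ultimately have "card t' = card (shift_down ?D)"
    using a0 unfolding tf shift_down_tile_at card_tile_at by simp
  then have "shift_down ?D = t'" using card_subset_eq[OF _ t'(2)] tf(1) by simp
  then show ?thesis using t'(1) unfolding shift_down_tile_at by simp
qed

lemma anchor_line_3_if_line_above:
  assumes A: "anchor_line M N 1 \<in> T"
  shows "tile_at (int N) g M \<in> T \<Longrightarrow> g 0 = 3 - int N + 2 * int j \<Longrightarrow> anchor_line M N 3 \<in> T"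
proof (induction j arbitrary: g)
  case 0
  let ?D' = "tile_at (int N) (\<lambda>i. g i - 2) M"
  have "?D' \<in> T" "valley_box N \<in> ?D'"
    using shift_down_line_in_T[OF 0(1)] 0(2) by (simp_all add: mem_tile_at)
  then have "?D' = anchor_line M N 1"
    using partition_same[OF partition_T _ A _ valley_box_mem_anchor_line] by simp
  then have "shift_tile 0 2 ?D' = anchor_line M N 3"
    using shift_tile_anchor_line[of 2 M N 1] by simp
  then have "tile_at (int N) g M = anchor_line M N 3"
    by (simp add: shift_tile_tile_at)
  then show ?case using 0(1) by simp
next
  case (Suc j)
  then show ?case using shift_down_line_in_T[OF Suc.prems(1)] Suc.IH[of "\<lambda>i. g i - 2"] by simp
qed

text \<open>Type BI forces a second tile of length \<open>(0, M)\<close>, necessarily anchored in column \<open>N + M\<close>.\<close>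
lemma second_line_tile:
  assumes A: "anchor_line M N 1 \<in> T"
  obtains g where "tile_at (int N) g M \<in> T" "g 0 \<noteq> 1 - int N"
proof -
  let ?X = "{tau\<in>T. tile_len tau = (0, M)}"
  have "even (card ?X)" using odd_if_valley_line[OF A] typeBI_T unfolding typeBI_def by blast
  moreover have "anchor_line M N 1 \<in> ?X" using A by simp
  ultimately have "?X \<noteq> {anchor_line M N 1}"
    by (metis (no_types, lifting) One_nat_def card.empty card_insert_disjoint empty_iff
        finite.emptyI odd_one)
  then obtain C where C: "C \<in> T" "tile_len C = (0, M)" "C \<noteq> anchor_line M N 1"
    using \<open>anchor_line M N 1 \<in> ?X\<close> by blast
  obtain a0 g n n' where tf: "C = tile_at a0 g (2*n+n')" "tile_len C = (n, n')"
    using tile_at_T[OF C(1)] by metis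
  then have C_eq: "C = tile_at a0 g M" using C(2) by simp
  let ?c = "(a0 + int M, g M)"
  have "?c \<in> C" "\<forall>c'\<in>C. fst c' \<le> fst ?c"
    unfolding C_eq by (auto simp: mem_tile_at')
  then have "fst ?c = int (M + N)"
    using ci_tiling_T C(1,2) M1 unfolding ci_tiling_def by auto
  then have a0: "a0 = int N" by simp
  have "g 0 \<noteq> 1 - int N"
  proof
    assume "g 0 = 1 - int N"
    then have "valley_box N \<in> C" unfolding C_eq a0 by (simp add: mem_tile_at)
    then show False using partition_same[OF partition_T C(1) A _ valley_box_mem_anchor_line] C(3) by simp
  qed
  then show ?thesis using that C(1) C_eq a0 by simp
qed

lemma anchor_line_3_in_T:
  assumes A: "anchor_line M N 1 \<in> T"
  shows "anchor_line M N 3 \<in> T"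
proof -
  obtain g where C: "tile_at (int N) g M \<in> T" "g 0 \<noteq> 1 - int N"
    using second_line_tile[OF A] .
  have "(int N, g 0) \<in> tile_at (int N) g M" by (simp add: mem_tile_at)
  then have "(int N, g 0) \<in> R" using tile_subset_R[OF C(1)] by blast
  then have "odd (int N + g 0)" "- int N < g 0" by (simp_all add: mem_R lam_height_def)
  then have "3 - int N \<le> g 0" "even (g 0 - 3 + int N)"
    using C(2) by presburger+
  then have "g 0 = 3 - int N + 2 * int (nat ((g 0 - 3 + int N) div 2))" by simp
  then show ?thesis using anchor_line_3_if_line_above[OF A C(1)] by blast
qed

end

section \<open>The valley box as a single tile\<close>

lemma region_split_left_singles:
  assumes M1: "1 \<le> M" and N1: "1 \<le> N" and len: "length mu1 + 1 = M + N"
  shows "region (lamMN M N) (True # mu1) = \<Union>(left_singles N) \<union> shift_tile 1 1 (region (lamMN (M - 1) N) mu1)"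
    (is "?L = ?S \<union> ?T")
proof (intro set_eqI)
  fix p :: box
  obtain a b where p: "p = (a, b)" by fastforce
  have l2: "length mu1 = M - 1 + N" using len M1 by simp
  have T: "(a, b) \<in> ?T \<longleftrightarrow> odd (a + b) \<and> 2 \<le> a \<and> a \<le> int (M + N) \<and> lam_height N (a - 1) + 1 < b \<and> b < 1 + height mu1 (nat (a - 1))"
    using mem_region_lamMN[OF l2, of "a - 1" "b - 1"] M1 by (auto simp: algebra_simps)
  have L: "(a, b) \<in> ?L \<longleftrightarrow> odd (a + b) \<and> 1 \<le> a \<and> a \<le> int (M + N) \<and> lam_height N a < b \<and> b < 1 + height mu1 (nat (a - 1))"
    by (rule mem_region_lamMN_Cons_True[OF len])
  have S: "(a, b) \<in> ?S \<longleftrightarrow> 1 \<le> a \<and> a \<le> int N \<and> b = 1 - a"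
    by (simp add: Union_left_singles)
  have hg: "- int (nat (a - 1)) \<le> height mu1 (nat (a - 1))" by (rule height_ge)
  show "p \<in> ?L \<longleftrightarrow> p \<in> ?S \<union> ?T"
  proof (cases "a = 1")
    case True
    then show ?thesis unfolding p Un_iff L S T using N1 by (auto simp: lam_height_def)
  next
    case False
    have e: "odd (a + b) \<Longrightarrow> - a < b \<Longrightarrow> b \<noteq> 1 - a \<Longrightarrow> 2 - a < b" by presburger
    have hg': "1 \<le> a \<Longrightarrow> - a < height mu1 (nat (a - 1))" using hg by simp
    show ?thesis unfolding p Un_iff L S T using False e N1 hg' by (auto simp: lam_height_def)
  qed
qed

lemma left_singles_disjoint_shifted_region: "\<Union>(left_singles N) \<inter> shift_tile 1 1 (region (lamMN (M - 1) N) mu1) = {}"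
proof -
  have "p \<notin> shift_tile 1 1 (region (lamMN (M - 1) N) mu1)" if "p \<in> \<Union>(left_singles N)" for p
  proof -
    obtain a b where ab: "p = (a, b)" by fastforce
    then have a: "p = (a, 1 - a)" "1 \<le> a" "a \<le> int N" using that by (auto simp: Union_left_singles)
    have "lam_height N (a - 1) = 1 - a" using a by (simp add: lam_height_def)
    moreover have "(a - 1, - a) \<in> region (lamMN (M - 1) N) mu1 \<Longrightarrow> lam_height N (a - 1) < - a"
    proof -
      assume "(a - 1, - a) \<in> region (lamMN (M - 1) N) mu1"
      then show ?thesis unfolding region_def using height_lamMN_eq_lam_height[of "a - 1" "M - 1" N] by auto
    qed
    ultimately show ?thesis using a by auto
  qed
  then show ?thesis by blast
qed

lemma weakly_above_True_Cons_lamMN: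
  assumes M1: "1 \<le> M" and len: "length mu1 + 1 = M + N"
  shows "weakly_above (True # mu1) (lamMN M N) \<longleftrightarrow> weakly_above mu1 (lamMN (M - 1) N)"
proof -
  have A: "height (lamMN M N) (Suc y) \<le> 1 + height mu1 y \<longleftrightarrow> height (lamMN (M - 1) N) y \<le> height mu1 y"
    if "y \<le> M - 1 + N" for y
  proof -
    have "- int y \<le> height mu1 y" by (rule height_ge)
    then show ?thesis using height_lamMN[of "Suc y" M N] height_lamMN[of y "M - 1" N] that M1 by auto
  qed
  have "(\<forall>x \<le> M + N. height (lamMN M N) x \<le> height (True # mu1) x) \<longleftrightarrow>
        (\<forall>y \<le> M - 1 + N. height (lamMN (M - 1) N) y \<le> height mu1 y)"
  proof
    assume H: "\<forall>x \<le> M + N. height (lamMN M N) x \<le> height (True # mu1) x"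
    show "\<forall>y \<le> M - 1 + N. height (lamMN (M - 1) N) y \<le> height mu1 y"
    proof (intro allI impI)
      fix y assume y: "y \<le> M - 1 + N"
      then have "Suc y \<le> M + N" using M1 by simp
      then show "height (lamMN (M - 1) N) y \<le> height mu1 y" using H[rule_format, of "Suc y"] A[OF y] by simp
    qed
  next
    assume H: "\<forall>y \<le> M - 1 + N. height (lamMN (M - 1) N) y \<le> height mu1 y"
    show "\<forall>x \<le> M + N. height (lamMN M N) x \<le> height (True # mu1) x"
    proof (intro allI impI)
      fix x assume x: "x \<le> M + N"
      show "height (lamMN M N) x \<le> height (True # mu1) x"
      proof (cases x)
        case (Suc y)
        then have "y \<le> M - 1 + N" using x M1 by simp
        then show ?thesis using H A Suc by simp
      qed simp
    qed
  qed
  then show ?thesis using len M1 unfolding weakly_above_def by auto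
qed

lemma resting_tile_over_left_singles:
  assumes ci: "ci_tiling R' (\<lambda>a. lam_height N (a - 1) + 1) L T'"
    and col: "\<And>p. p \<in> R' \<Longrightarrow> 2 \<le> fst p \<and> lam_height N (fst p - 1) + 1 < snd p"
    and tT: "tau \<in> T'" and bot: "rests_on (\<lambda>a. lam_height N (a - 1) + 1) tau"
  shows "rests_on (lam_height N) tau \<or> (\<exists>tau'\<in>left_singles N. shift_down tau \<subseteq> tau')"
proof (cases "\<exists>p\<in>tau. fst p \<le> int N")
  case True
  then obtain a b where ab: "(a, b) \<in> tau" "a \<le> int N" by auto
  have above: "\<And>p. p \<in> R' \<Longrightarrow> lam_height N (fst p - 1) + 1 < snd p" using col by blast
  obtain a0 f n n' where tf: "tau = tile_at a0 f (2*n+n')" "ballot_profile f n n'" "tile_len tau = (n, n')"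
    and on: "\<And>i. i \<le> 2*n+n' \<Longrightarrow> f i = lam_height N (a0 + int i - 1) + 1 + 1"
    using resting_tileE[OF ci above tT bot] by blast
  have sub: "tau \<subseteq> R'" using ci_tiling_subset[OF ci tT] .
  have a_in: "a0 \<le> a" "a \<le> a0 + int (2*n+n')" using ab(1) unfolding tf mem_tile_at by auto
  have "(a0 + int 0, f 0) \<in> tau" unfolding tf by (rule tile_at_memI) simp
  then have a02: "2 \<le> a0" using col sub by fastforce
  have "a0 = a \<and> 2*n+n' = 0"
  proof (rule resting_tile_on_descent[OF tf(1) tf(2) refl, of "\<lambda>x. lam_height N (x - 1) + 1"])
    show "\<And>i. i \<le> 2 * n + n' \<Longrightarrow> f i = lam_height N (a0 + int i - 1) + 1 + 1" using on by simp
    show "a0 \<le> a" "a \<le> a0 + int (2 * n + n')" using a_in by auto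
    fix x assume "a0 \<le> x" "x < a"
    then show "lam_height N (a - 1) + 1 < lam_height N (x - 1) + 1" using ab(2) by (simp add: lam_height_def)
  next
    show "lam_height N (a + 1 - 1) + 1 < lam_height N (a - 1) + 1" using ab(2) a02 a_in by (simp add: lam_height_def)
  qed
  then have "tau = {(a, f 0)}" using tf(1) by (simp add: tile_at_def)
  moreover have "f 0 = 3 - a" using on[of 0] \<open>a0 = a \<and> 2*n+n' = 0\<close> ab(2) by (simp add: lam_height_def)
  ultimately have "shift_down tau = {(a, 1 - a)}" by (simp add: shift_down_singleton)
  moreover have "{(a, 1 - a)} \<in> left_singles N" using ab(2) a_in a02
    unfolding left_singles_def by (intro imageI) simp
  ultimately show ?thesis by auto
next
  case False
  have "snd p - 1 \<le> lam_height N (fst p)" if "p \<in> tau" for p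
  proof -
    have "fst p > int N" using False that by auto
    then have "lam_height N (fst p - 1) + 1 = lam_height N (fst p)" by (simp add: lam_height_def)
    then show ?thesis using bot that by fastforce
  qed
  then show ?thesis by blast
qed

lemma ci_tiling_add_left_singles:
  assumes ci: "ci_tiling R' (\<lambda>a. lam_height N (a - 1) + 1) L T'"
    and dis: "\<Union>(left_singles N) \<inter> R' = {}"
    and col: "\<And>p. p \<in> R' \<Longrightarrow> 2 \<le> fst p \<and> lam_height N (fst p - 1) + 1 < snd p"
  shows "ci_tiling (\<Union>(left_singles N) \<union> R') (lam_height N) L (left_singles N \<union> T')"
proof (rule ci_tiling_Un[OF ci partition_left_singles dis])
  fix tau assume "tau \<in> left_singles N"
  then obtain a where a: "tau = {(a, 1 - a)}" "a \<le> int N" by (auto simp: left_singles_def)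
  then show "\<exists>n n'. ballot_tile tau n n'" using ballot_single by blast
  show "\<And>c. 1 \<le> snd (tile_len tau) \<Longrightarrow> c \<in> tau \<Longrightarrow> \<forall>c'\<in>tau. fst c' \<le> fst c \<Longrightarrow> fst c = L"
    using a by simp
  show "rests_on (lam_height N) tau \<or> (\<exists>t'\<in>left_singles N. shift_down tau \<subseteq> t')"
    using a by (simp add: lam_height_def)
next
  fix tau assume "tau \<in> T'" "rests_on (\<lambda>a. lam_height N (a - 1) + 1) tau"
  then show "rests_on (lam_height N) tau \<or> (\<exists>t'\<in>left_singles N. shift_down tau \<subseteq> t')"
    using resting_tile_over_left_singles[OF ci col] by blast
qed

lemma ci_tiling_remove_left_singles:
  assumes ci: "ci_tiling (\<Union>(left_singles N) \<union> R') (lam_height N) L T"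
    and sub: "left_singles N \<subseteq> T"
    and dis: "\<Union>(left_singles N) \<inter> R' = {}"
    and col: "\<And>p. p \<in> R' \<Longrightarrow> 2 \<le> fst p \<and> lam_height N (fst p - 1) + 1 < snd p"
  shows "ci_tiling R' (\<lambda>a. lam_height N (a - 1) + 1) L (T - left_singles N)"
proof (rule ci_tiling_Diff[OF ci sub dis])
  fix tau assume tau: "tau \<subseteq> R'" "rests_on (lam_height N) tau"
  have "snd p - 1 \<le> lam_height N (fst p - 1) + 1" if "p \<in> tau" for p
  proof -
    have "2 \<le> fst p" "lam_height N (fst p - 1) + 1 < snd p" using col tau(1) that by blast+
    moreover have "snd p - 1 \<le> lam_height N (fst p)" using tau(2) that by blast
    ultimately show ?thesis by (simp add: lam_height_def split: if_splits)
  qed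
  then show "rests_on (\<lambda>a. lam_height N (a - 1) + 1) tau" by blast
next
  fix tau t' assume "tau \<noteq> {}" "t' \<in> left_singles N" "shift_down tau \<subseteq> t'"
  moreover obtain a where a: "t' = {(a, 1 - a)}" "1 \<le> a" "a \<le> int N"
    using \<open>t' \<in> left_singles N\<close> by (auto simp: left_singles_def)
  ultimately have "tau = {(a, 1 - a + 2)}" using shift_down_subset_singleton[of tau a "1 - a"] by simp
  then show "rests_on (\<lambda>a. lam_height N (a - 1) + 1) tau" using a by (simp add: lam_height_def)
qed

lemma mem_shifted_region_lamMN:
  assumes "length mu = M + N" and "p \<in> shift_tile 1 1 (region (lamMN M N) mu)"
  shows "2 \<le> fst p \<and> fst p \<le> int (M + N) + 1 \<and> lam_height N (fst p - 1) + 1 < snd p"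
proof -
  obtain a b where p: "p = (a, b)" by fastforce
  then have "(a - 1, b - 1) \<in> region (lamMN M N) mu" using assms(2) by simp
  then show ?thesis unfolding p mem_region_lamMN[OF assms(1)] by auto
qed

lemma typeBI_left_singles_Un:
  assumes "finite X" "left_singles N \<inter> X = {}"
  shows "typeBI (left_singles N \<union> X) \<longleftrightarrow> typeBI X"
proof (rule typeBI_Un)
  show "\<forall>tau\<in>left_singles N. \<not> (even (snd (tile_len tau)) \<and> 2 \<le> snd (tile_len tau))"
    using tile_len_left_singles by fastforce
  show "\<forall>n n'. odd n' \<longrightarrow> even (card {tau \<in> left_singles N. tile_len tau = (n, n')})"
  proof (intro allI impI)
    fix n n' :: nat assume "odd n'"
    then have e: "{tau \<in> left_singles N. tile_len tau = (n, n')} = {}" using tile_len_left_singles by fastforce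
    show "even (card {tau \<in> left_singles N. tile_len tau = (n, n')})" unfolding e by simp
  qed
qed (use assms in auto)

lemma glue_left_singles:
  assumes M1: "1 \<le> M" and N1: "1 \<le> N" and it: "(mu1, T1) \<in> bi_tilings (lamMN (M - 1) N)"
  shows "(True # mu1, left_singles N \<union> shift_tiling 1 1 T1) \<in> bi_tilings (lamMN M N)"
    and "left_singles N \<inter> shift_tiling 1 1 T1 = {}"
proof -
  let ?R2 = "region (lamMN (M - 1) N) mu1"
  have w: "weakly_above mu1 (lamMN (M - 1) N)"
    and ci: "ci_tiling ?R2 (lam_height N) (int (M - 1 + N)) T1" and bi: "typeBI T1"
    using it unfolding bi_tilings_lamMN_iff by auto
  have len: "length mu1 + 1 = M + N" and l2: "length mu1 = M - 1 + N"
    using w M1 by (simp_all add: weakly_above_def)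
  have ci2: "ci_tiling (shift_tile 1 1 ?R2) (\<lambda>a. lam_height N (a - 1) + 1) (int (M + N)) (shift_tiling 1 1 T1)"
    using ci_tiling_shift_iff[of 1 1 ?R2 "lam_height N" "int (M - 1 + N)" T1] ci M1 by (simp add: add.commute)
  have col: "2 \<le> fst p \<and> lam_height N (fst p - 1) + 1 < snd p" if "p \<in> shift_tile 1 1 ?R2" for p
    using mem_shifted_region_lamMN[OF l2 that] by simp
  show dT: "left_singles N \<inter> shift_tiling 1 1 T1 = {}"
    by (rule disjoint_shift_tiling[OF _ left_singles_disjoint_shifted_region[of N M mu1]])
      (use ci in \<open>simp add: ci_tiling_def\<close>)
  have "ci_tiling (region (lamMN M N) (True # mu1)) (lam_height N) (int (M + N))
      (left_singles N \<union> shift_tiling 1 1 T1)"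
    unfolding region_split_left_singles[OF M1 N1 len]
    by (rule ci_tiling_add_left_singles[OF ci2 left_singles_disjoint_shifted_region col])
  moreover have "typeBI (left_singles N \<union> shift_tiling 1 1 T1)"
    using typeBI_left_singles_Un[OF _ dT] finite_of_bi_tilings[OF it] bi by simp
  moreover have "weakly_above (True # mu1) (lamMN M N)"
    using weakly_above_True_Cons_lamMN[OF M1 len] w by simp
  ultimately show "(True # mu1, left_singles N \<union> shift_tiling 1 1 T1) \<in> bi_tilings (lamMN M N)"
    unfolding bi_tilings_lamMN_iff by simp
qed

lemma left_singles_Suc: "1 \<le> N \<Longrightarrow> left_singles N = insert {valley_box N} (left_singles (N - 1))"
proof -
  assume N: "1 \<le> N"
  then have "{1..int N} = insert (int N) {1..int (N - 1)}" by auto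
  then show ?thesis unfolding left_singles_def by simp
qed

lemma (in up_start) cut_left_singles:
  assumes V: "{valley_box N} \<in> T"
  shows "left_singles N \<subseteq> T"
    and "(mu1, shift_tiling (-1) (-1) (T - left_singles N)) \<in> bi_tilings (lamMN (M - 1) N)"
proof -
  show sub: "left_singles N \<subseteq> T" using left_singles_Suc[OF N1] left_singles_subset_T V by simp
  let ?R2 = "region (lamMN (M - 1) N) mu1"
  let ?T1 = "shift_tiling (-1) (-1) (T - left_singles N)"
  have ci: "ci_tiling R (lam_height N) (int (M + N)) T" and w: "weakly_above (True # mu1) (lamMN M N)"
    using it unfolding bi_tilings_lamMN_iff by auto
  have l2: "length mu1 = M - 1 + N" using length_mu1 M1 by simp
  have col: "2 \<le> fst p \<and> lam_height N (fst p - 1) + 1 < snd p" if "p \<in> shift_tile 1 1 ?R2" for p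
    using mem_shifted_region_lamMN[OF l2 that] by simp
  have "ci_tiling (shift_tile 1 1 ?R2) (\<lambda>a. lam_height N (a - 1) + 1) (int (M + N)) (T - left_singles N)"
    by (rule ci_tiling_remove_left_singles[OF _ sub left_singles_disjoint_shifted_region col])
      (use ci region_split_left_singles[OF M1 N1 length_mu1] in simp)
  then have "ci_tiling ?R2 (lam_height N) (int (M - 1 + N)) ?T1"
    using ci_tiling_shift_iff[of 1 1 ?R2 "lam_height N" "int (M - 1 + N)" ?T1] M1 by (simp add: add.commute)
  moreover have "weakly_above mu1 (lamMN (M - 1) N)"
    using weakly_above_True_Cons_lamMN[OF M1 length_mu1] w by simp
  moreover have "typeBI ?T1"
    using typeBI_T typeBI_left_singles_Un[of "T - left_singles N" N] finite_T sub
    by (simp add: Un_absorb1)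
  ultimately show "(mu1, ?T1) \<in> bi_tilings (lamMN (M - 1) N)" unfolding bi_tilings_lamMN_iff by simp
qed

lemma sum_valley_single:
  assumes M1: "1 \<le> M" and N1: "1 \<le> N"
  shows "(\<Sum>(mu, T) \<in> {(mu, T) \<in> bi_tilings (lamMN M N). hd mu = True \<and> {valley_box N} \<in> T}.
            monom (1::int) (art T))
    = monom 1 N * (\<Sum>(mu, T) \<in> bi_tilings (lamMN (M - 1) N). monom 1 (art T))"
proof -
  have "{(mu, T) \<in> bi_tilings (lamMN M N). hd mu = True \<and> {valley_box N} \<in> T}
      = (\<lambda>(mu1, T1). (True # mu1, left_singles N \<union> shift_tiling 1 1 T1)) ` bi_tilings (lamMN (M - 1) N)"
  proof (intro set_eqI iffI)
    fix x assume "x \<in> {(mu, T) \<in> bi_tilings (lamMN M N). hd mu = True \<and> {valley_box N} \<in> T}"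
    then obtain mu T where x: "x = (mu, T)" "(mu, T) \<in> bi_tilings (lamMN M N)" "hd mu = True"
      "{valley_box N} \<in> T" by auto
    then have "length mu = M + N" by (simp add: bi_tilings_def weakly_above_def)
    then obtain mu1 where mu: "mu = True # mu1" using x(3) N1 by (cases mu) auto
    interpret up_start M N mu1 T using M1 N1 x(2) mu by unfold_locales simp_all
    have "x = (True # mu1, left_singles N \<union> shift_tiling 1 1 (shift_tiling (-1) (-1) (T - left_singles N)))"
      using cut_left_singles(1)[OF x(4)] x mu by auto
    then show "x \<in> (\<lambda>(mu1, T1). (True # mu1, left_singles N \<union> shift_tiling 1 1 T1)) ` bi_tilings (lamMN (M - 1) N)"
      using cut_left_singles(2)[OF x(4)] by force
  next
    fix x assume "x \<in> (\<lambda>(mu1, T1). (True # mu1, left_singles N \<union> shift_tiling 1 1 T1)) ` bi_tilings (lamMN (M - 1) N)"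
    moreover have "{valley_box N} \<in> left_singles N" unfolding left_singles_def using N1 by auto
    ultimately show "x \<in> {(mu, T) \<in> bi_tilings (lamMN M N). hd mu = True \<and> {valley_box N} \<in> T}"
      using glue_left_singles(1)[OF M1 N1] by auto
  qed
  then show ?thesis
    by (rule sum_art_glue) (use finite_of_bi_tilings glue_left_singles(2)[OF M1 N1]
        sum_tile_weight_left_singles in auto)
qed

section \<open>The valley box in a straight anchor tile\<close>

lemma lam_height_le_shifted: "2 \<le> N \<Longrightarrow> lam_height N a \<le> lam_height (N - 2) (a - 1) + 1"
  by (simp add: lam_height_def)

lemma region_valley_left:
  assumes N2: "2 \<le> N" and len: "length mu1 + 1 = M + N" and a: "a \<le> int N - 1"
  shows "(a, b) \<in> region (lamMN M N) (True # mu1) \<longleftrightarrow>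
    (a, b) \<in> \<Union>(left_singles (N - 1)) \<or> (a, b) \<in> shift_tile 1 1 (region (lamMN (M + 1) (N - 2)) mu1)"
    (is "?L \<longleftrightarrow> ?S \<or> ?T")
proof -
  have l3: "length mu1 = M + 1 + (N - 2)" using len N2 by simp
  let ?m = "height mu1 (nat (a - 1))"
  have T: "?T \<longleftrightarrow> odd (a + b) \<and> 2 \<le> a \<and> a \<le> int (M + N) \<and> lam_height (N - 2) (a - 1) + 1 < b \<and> b < 1 + ?m"
    using mem_region_lamMN[OF l3, of "a - 1" "b - 1"] N2 by (auto simp: algebra_simps)
  have L: "?L \<longleftrightarrow> odd (a + b) \<and> 1 \<le> a \<and> a \<le> int (M + N) \<and> lam_height N a < b \<and> b < 1 + ?m"
    by (rule mem_region_lamMN_Cons_True[OF len])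
  have S: "?S \<longleftrightarrow> 1 \<le> a \<and> a \<le> int N - 1 \<and> b = 1 - a"
    using N2 by (simp add: Union_left_singles)
  have hg: "- int (nat (a - 1)) \<le> ?m" by (rule height_ge)
  show ?thesis
  proof (cases "a = 1")
    case True
    then show ?thesis unfolding L S T using N2 by (auto simp: lam_height_def)
  next
    case False
    have hg': "1 \<le> a \<Longrightarrow> - a < ?m" using hg by simp
    have e: "odd (a + b) \<Longrightarrow> - a < b \<Longrightarrow> b \<noteq> 1 - a \<Longrightarrow> 2 - a < b" by presburger
    show ?thesis unfolding L S T using a False e hg' N2 by (auto simp: lam_height_def)
  qed
qed

lemma region_valley_right:
  assumes N2: "2 \<le> N" and len: "length mu1 + 1 = M + N" and aN: "int N \<le> a"
    and Bsub: "anchor_line M N 3 \<subseteq> region (lamMN M N) (True # mu1)"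
  shows "(a, b) \<in> region (lamMN M N) (True # mu1) \<longleftrightarrow>
    (a, b) \<in> anchor_line M N 1 \<or> (a, b) \<in> anchor_line M N 3 \<or>
    (a, b) \<in> shift_tile 1 1 (region (lamMN (M + 1) (N - 2)) mu1)"
    (is "?L \<longleftrightarrow> ?A \<or> ?B \<or> ?T")
proof -
  have l3: "length mu1 = M + 1 + (N - 2)" using len N2 by simp
  let ?m = "height mu1 (nat (a - 1))"
  have T: "?T \<longleftrightarrow> odd (a + b) \<and> 2 \<le> a \<and> a \<le> int (M + N) \<and> lam_height (N - 2) (a - 1) + 1 < b \<and> b < 1 + ?m"
    using mem_region_lamMN[OF l3, of "a - 1" "b - 1"] N2 by (auto simp: algebra_simps)
  have L: "?L \<longleftrightarrow> odd (a + b) \<and> 1 \<le> a \<and> a \<le> int (M + N) \<and> lam_height N a < b \<and> b < 1 + ?m"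
    by (rule mem_region_lamMN_Cons_True[OF len])
  have A: "?A \<longleftrightarrow> a \<le> int N + int M \<and> b = 1 + a - 2 * int N" using aN by (simp add: mem_anchor_line)
  have B: "?B \<longleftrightarrow> a \<le> int N + int M \<and> b = 3 + a - 2 * int N" using aN by (simp add: mem_anchor_line)
  have Bf: "a \<le> int N + int M \<Longrightarrow> 3 + a - 2 * int N < 1 + ?m"
  proof -
    assume "a \<le> int N + int M"
    then have "(a, 3 + a - 2 * int N) \<in> anchor_line M N 3" using aN by (simp add: mem_anchor_line)
    then have "(a, 3 + a - 2 * int N) \<in> region (lamMN M N) (True # mu1)" using Bsub by blast
    then show ?thesis unfolding mem_region_lamMN_Cons_True[OF len] by blast
  qed
  have h1: "lam_height N a = a - 2 * int N" using aN by (simp add: lam_height_def)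
  have h2: "lam_height (N - 2) (a - 1) + 1 = a - 2 * int N + 4" using aN N2 by (simp add: lam_height_def)
  have e: "odd (a + b) \<Longrightarrow> a - 2 * int N < b \<Longrightarrow> b \<noteq> 1 + a - 2 * int N \<Longrightarrow> b \<noteq> 3 + a - 2 * int N
    \<Longrightarrow> a - 2 * int N + 4 < b" by presburger
  have e2: "b = 1 + a - 2 * int N \<Longrightarrow> odd (a + b)" "b = 3 + a - 2 * int N \<Longrightarrow> odd (a + b)" by presburger+
  show ?thesis unfolding L A B T h1 h2 using aN e e2 Bf N2 by (auto simp: algebra_simps)
qed

lemma region_split_valley_tiles:
  assumes N2: "2 \<le> N" and len: "length mu1 + 1 = M + N"
    and Bsub: "anchor_line M N 3 \<subseteq> region (lamMN M N) (True # mu1)"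
  shows "region (lamMN M N) (True # mu1) = \<Union>(left_singles (N - 1)) \<union> anchor_line M N 1
    \<union> anchor_line M N 3 \<union> shift_tile 1 1 (region (lamMN (M + 1) (N - 2)) mu1)"
proof (intro set_eqI)
  fix p :: box
  obtain a b where p: "p = (a, b)" by fastforce
  show "p \<in> region (lamMN M N) (True # mu1) \<longleftrightarrow> p \<in> \<Union>(left_singles (N - 1)) \<union> anchor_line M N 1
    \<union> anchor_line M N 3 \<union> shift_tile 1 1 (region (lamMN (M + 1) (N - 2)) mu1)"
  proof (cases "a \<le> int N - 1")
    case True
    then have "(a, b) \<notin> anchor_line M N 1" "(a, b) \<notin> anchor_line M N 3" by (simp_all add: mem_anchor_line)
    then show ?thesis unfolding p using region_valley_left[OF N2 len True] by blast
  next
    case False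
    then have "(a, b) \<notin> \<Union>(left_singles (N - 1))" using N2 by (simp add: Union_left_singles)
    moreover have "int N \<le> a" using False by simp
    ultimately show ?thesis unfolding p using region_valley_right[OF N2 len _ Bsub] by blast
  qed
qed

lemma weakly_above_valley_fwd:
  assumes M1: "1 \<le> M" and N2: "2 \<le> N" and w: "weakly_above mu1 (lamMN (M + 1) (N - 2))"
  shows "weakly_above (True # mu1) (lamMN M N)" "anchor_line M N 3 \<subseteq> region (lamMN M N) (True # mu1)"
proof -
  have len: "length mu1 + 1 = M + N" using w N2 by (simp add: weakly_above_def)
  have H: "height (lamMN (M + 1) (N - 2)) y \<le> height mu1 y" if "y \<le> M + N - 1" for y
    using w that N2 unfolding weakly_above_def by simp
  have l3: "height (lamMN (M + 1) (N - 2)) y = (if y \<le> N - 2 then - int y else int y - 2 * int (N - 2))"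
    if "y \<le> M + N - 1" for y using height_lamMN[of y "M + 1" "N - 2"] that N2 by simp
  have "height (lamMN M N) x \<le> height (True # mu1) x" if "x \<le> M + N" for x
  proof (cases x)
    case (Suc y)
    then have y: "y \<le> M + N - 1" using that by simp
    have "height (lamMN M N) (Suc y) \<le> 1 + height (lamMN (M + 1) (N - 2)) y"
      using height_lamMN[of "Suc y" M N] l3[OF y] that Suc N2 by auto
    then show ?thesis using H[OF y] Suc by simp
  qed simp
  then show "weakly_above (True # mu1) (lamMN M N)" using len by (simp add: weakly_above_def)
  show "anchor_line M N 3 \<subseteq> region (lamMN M N) (True # mu1)"
  proof
    fix p assume "p \<in> anchor_line M N 3"
    then obtain a b where p: "p = (a, b)" "int N \<le> a" "a \<le> int N + int M" "b = 3 + a - 2 * int N"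
      by (cases p) (auto simp: mem_anchor_line)
    have y: "nat (a - 1) \<le> M + N - 1" using p N2 by simp
    have "height (lamMN (M + 1) (N - 2)) (nat (a - 1)) = a - 1 - 2 * int (N - 2)"
      using l3[OF y] p N2 by auto
    then have "a - 1 - 2 * int (N - 2) \<le> height mu1 (nat (a - 1))" using H[OF y] by simp
    moreover have "odd (a + b)" using p(4) by presburger
    ultimately show "p \<in> region (lamMN M N) (True # mu1)"
      unfolding p(1) mem_region_lamMN_Cons_True[OF len] using p N2 by (simp add: lam_height_def)
  qed
qed

lemma weakly_above_valley_bwd:
  assumes M1: "1 \<le> M" and N2: "2 \<le> N" and len: "length mu1 + 1 = M + N"
    and Bsub: "anchor_line M N 3 \<subseteq> region (lamMN M N) (True # mu1)"
  shows "weakly_above mu1 (lamMN (M + 1) (N - 2))"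
proof -
  have "height (lamMN (M + 1) (N - 2)) y \<le> height mu1 y" if y: "y \<le> M + 1 + (N - 2)" for y
  proof (cases "y \<le> N - 2")
    case True
    then show ?thesis using height_lamMN[of y "M + 1" "N - 2"] y height_ge[of y mu1] by simp
  next
    case False
    let ?a = "int y + 1"
    have "int N \<le> ?a" "?a \<le> int N + int M" using False y N2 by linarith+
    then have "(?a, 3 + ?a - 2 * int N) \<in> anchor_line M N 3" by (simp add: mem_anchor_line)
    then have "(?a, 3 + ?a - 2 * int N) \<in> region (lamMN M N) (True # mu1)" using Bsub by blast
    then have "3 + ?a - 2 * int N < 1 + height mu1 (nat (?a - 1))" unfolding mem_region_lamMN_Cons_True[OF len] by blast
    then show ?thesis using height_lamMN[of y "M + 1" "N - 2"] y False N2 by simp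
  qed
  then show ?thesis using len N2 by (simp add: weakly_above_def)
qed

definition valley_tiles :: "nat \<Rightarrow> nat \<Rightarrow> box set set" where
  "valley_tiles M N = left_singles (N - 1) \<union> {anchor_line M N 1, anchor_line M N 3}"

lemma anchor_line_anchored:
  assumes "c \<in> anchor_line M N c0" "\<forall>c'\<in>anchor_line M N c0. fst c' \<le> fst c"
  shows "fst c = int N + int M"
proof -
  have "(int N + int M, c0 + int M - int N) \<in> anchor_line M N c0" by (simp add: mem_anchor_line)
  then have "int N + int M \<le> fst c" using assms(2) by fastforce
  moreover have "fst c \<le> int N + int M" using assms(1) by (cases c) (simp add: mem_anchor_line)
  ultimately show ?thesis by simp
qed

lemma anchor_line_ne: "anchor_line M N c \<noteq> {}"
  by (simp add: anchor_line_def)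

lemma anchor_line_13_disj: "anchor_line M N 1 \<inter> anchor_line M N 3 = {}"
  by (auto simp: mem_anchor_line)

lemma anchor_line_13_ne: "anchor_line M N 1 \<noteq> anchor_line M N 3"
  using anchor_line_13_disj anchor_line_ne by blast

lemma left_singles_anchor_line_disj: "\<Union>(left_singles (N - 1)) \<inter> anchor_line M N c = {}"
  by (auto simp: Union_left_singles mem_anchor_line)

lemma anchor_line_notin_left_singles: "1 \<le> M \<Longrightarrow> anchor_line M N c \<notin> left_singles K"
proof
  assume "1 \<le> M" "anchor_line M N c \<in> left_singles K"
  then have "card (anchor_line M N c) = 1" by (auto simp: left_singles_def)
  then show False using card_anchor_line \<open>1 \<le> M\<close> by simp
qed

lemma Union_valley_tiles: "\<Union>(valley_tiles M N) = \<Union>(left_singles (N - 1)) \<union> anchor_line M N 1 \<union> anchor_line M N 3"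
  by (auto simp: valley_tiles_def)

lemma finite_valley_tiles[simp]: "finite (valley_tiles M N)"
  by (simp add: valley_tiles_def)

lemma partition_valley_tiles: "partition_on (\<Union>(valley_tiles M N)) (valley_tiles M N)"
proof -
  have p1: "partition_on (anchor_line M N 1 \<union> anchor_line M N 3) {anchor_line M N 1, anchor_line M N 3}"
  proof (rule partition_onI)
    show "{} \<notin> {anchor_line M N 1, anchor_line M N 3}" using anchor_line_ne by (metis empty_iff insert_iff)
  qed (use anchor_line_13_disj in \<open>auto simp: disjnt_def\<close>)
  have "partition_on (\<Union>(left_singles (N - 1)) \<union> (anchor_line M N 1 \<union> anchor_line M N 3)) (left_singles (N - 1) \<union> {anchor_line M N 1, anchor_line M N 3})"
    by (rule partition_on_Un[OF partition_left_singles p1]) (use left_singles_anchor_line_disj in blast)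
  moreover have "\<Union>(valley_tiles M N) = \<Union>(left_singles (N - 1)) \<union> (anchor_line M N 1 \<union> anchor_line M N 3)" unfolding Union_valley_tiles by blast
  ultimately show ?thesis unfolding valley_tiles_def by simp
qed

lemma sum_tile_weight_valley_tiles:
  assumes "1 \<le> M" "1 \<le> N"
  shows "(\<Sum>tau\<in>valley_tiles M N. tile_weight tau) = 2 * (M + N)"
proof -
  have "anchor_line M N 1 \<notin> insert (anchor_line M N 3) (left_singles (N - 1))"
    using anchor_line_notin_left_singles[OF assms(1)] anchor_line_13_ne by simp
  moreover have "anchor_line M N 3 \<notin> left_singles (N - 1)" using anchor_line_notin_left_singles[OF assms(1)] by simp
  ultimately have "(\<Sum>tau\<in>valley_tiles M N. tile_weight tau) = tile_weight (anchor_line M N 1) + (tile_weight (anchor_line M N 3) + (\<Sum>tau\<in>left_singles (N - 1). tile_weight tau))"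
    unfolding valley_tiles_def by simp
  also have "\<dots> = 2 * (M + N)" using sum_tile_weight_left_singles[of "N - 1"] tile_weight_anchor_line[OF assms(1)] assms by simp
  finally show ?thesis .
qed

lemma typeBI_valley_tiles_Un:
  assumes M1: "1 \<le> M" and odd: "odd M" and fin: "finite X" and dis: "valley_tiles M N \<inter> X = {}"
  shows "typeBI (valley_tiles M N \<union> X) \<longleftrightarrow> typeBI X"
proof (rule typeBI_Un[OF finite_valley_tiles fin dis])
  show "\<forall>tau\<in>valley_tiles M N. \<not> (even (snd (tile_len tau)) \<and> 2 \<le> snd (tile_len tau))"
    using tile_len_left_singles odd by (auto simp: valley_tiles_def)
  show "\<forall>n n'. odd n' \<longrightarrow> even (card {tau \<in> valley_tiles M N. tile_len tau = (n, n')})"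
  proof (intro allI impI)
    fix n n' :: nat assume o: "odd n'"
    show "even (card {tau \<in> valley_tiles M N. tile_len tau = (n, n')})"
    proof (cases "(n, n') = (0, M)")
      case True
      have "{tau \<in> valley_tiles M N. tile_len tau = (n, n')} = {anchor_line M N 1, anchor_line M N 3}"
        using True tile_len_left_singles M1 by (auto simp: valley_tiles_def)
      then show ?thesis using anchor_line_13_ne by simp
    next
      case False
      have "tile_len tau \<noteq> (n, n')" if "tau \<in> valley_tiles M N" for tau
      proof (cases "tau \<in> left_singles (N - 1)")
        case True
        then show ?thesis using tile_len_left_singles o by fastforce
      next
        case False
        then have "tau = anchor_line M N 1 \<or> tau = anchor_line M N 3" using that by (simp add: valley_tiles_def)
        then show ?thesis using False \<open>(n, n') \<noteq> (0, M)\<close> by auto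
      qed
      then have e: "{tau \<in> valley_tiles M N. tile_len tau = (n, n')} = {}" by blast
      show ?thesis unfolding e by simp
    qed
  qed
qed

lemma valley_tiles_ballot: "tau \<in> valley_tiles M N \<Longrightarrow> \<exists>n n'. ballot_tile tau n n'"
  unfolding valley_tiles_def left_singles_def using ballot_single ballot_anchor_line by blast

lemma valley_tiles_anchored:
  assumes "tau \<in> valley_tiles M N" "1 \<le> snd (tile_len tau)" "c \<in> tau" "\<forall>c'\<in>tau. fst c' \<le> fst c"
  shows "fst c = int (M + N)"
  using assms anchor_line_anchored[of c M N] tile_len_left_singles
  by (auto simp: valley_tiles_def add.commute)

lemma valley_tiles_rest_or_covered:
  assumes N2: "2 \<le> N" and tau: "tau \<in> valley_tiles M N"
  shows "rests_on (lam_height N) tau \<or> (\<exists>tau'\<in>valley_tiles M N. shift_down tau \<subseteq> tau')"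
proof -
  consider (s) "tau \<in> left_singles (N - 1)" | (A) "tau = anchor_line M N 1" | (B) "tau = anchor_line M N 3"
    using tau by (auto simp: valley_tiles_def)
  then show ?thesis
  proof cases
    case s
    then obtain a where "tau = {(a, 1 - a)}" "a \<le> int N - 1" using N2 by (auto simp: left_singles_def)
    then show ?thesis by (simp add: lam_height_def)
  next
    case A
    then have "rests_on (lam_height N) tau" by (auto simp: mem_anchor_line lam_height_def)
    then show ?thesis ..
  next
    case B
    have "shift_down tau = anchor_line M N 1" unfolding B shift_down_eq_shift_tile shift_tile_anchor_line by simp
    then show ?thesis by (auto simp: valley_tiles_def)
  qed
qed

lemma resting_tile_right_of_valley:
  assumes tf: "tau = tile_at a0 f k"
    and on: "\<And>i. i \<le> k \<Longrightarrow> f i = lam_height (N - 2) (a0 + int i - 1) + 1 + 1"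
    and a0: "int N \<le> a0" "a0 + int k \<le> int (M + N)" and N2: "2 \<le> N"
  shows "shift_down tau \<subseteq> anchor_line M N 3"
proof
  fix q assume "q \<in> shift_down tau"
  then have "q \<in> tile_at a0 (\<lambda>i. f i - 2) k" unfolding tf shift_down_tile_at .
  then obtain i where i: "i \<le> k" "q = (a0 + int i, f i - 2)" unfolding tile_at_def by auto
  have "f i = a0 + int i - 2 * int N + 5" using on[OF i(1)] a0 N2 by (simp add: lam_height_def)
  then show "q \<in> anchor_line M N 3" using i a0 by (simp add: mem_anchor_line)
qed

lemma straight_tile_before_valley:
  assumes ci: "ci_tiling R' H (int (M + N)) T'" and bi: "typeBI T'" and odd: "odd M"
    and tT: "tau \<in> T'" and tf: "tau = tile_at (int N - 1) f n'" "tile_len tau = (0, n')"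
  shows "n' = 0"
proof (rule ccontr)
  assume "n' \<noteq> 0"
  let ?c = "(int N - 1 + int n', f n')"
  have "?c \<in> tau" "\<forall>c'\<in>tau. fst c' \<le> fst ?c" unfolding tf(1) by (auto simp: mem_tile_at')
  then have "fst ?c = int (M + N)" using ci_tiling_parts(3)[OF ci tT] \<open>n' \<noteq> 0\<close> tf(2) by simp
  then have "tile_len tau = (0, M + 1)" using tf(2) by simp
  moreover have "\<not> (even (snd (tile_len tau)) \<and> 2 \<le> snd (tile_len tau))"
    using bi tT by (simp add: typeBI_def)
  moreover have "1 \<le> M" using odd by presburger
  ultimately show False using odd by simp
qed

text \<open>
  Left of the valley the shifted boundary descends, so a resting tile there is a single box;
  in the column \<open>N - 1\<close> it would otherwise be a straight tile of even length \<open>(0, M + 1)\<close>.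
\<close>
lemma resting_tile_left_of_valley:
  assumes ci: "ci_tiling R' (\<lambda>a. lam_height (N - 2) (a - 1) + 1) (int (M + N)) T'"
    and bi: "typeBI T'" and odd: "odd M" and N2: "2 \<le> N" and tT: "tau \<in> T'"
    and tf: "tau = tile_at a0 f (2*n+n')" "ballot_profile f n n'" "tile_len tau = (n, n')"
    and on: "\<And>i. i \<le> 2*n+n' \<Longrightarrow> f i = lam_height (N - 2) (a0 + int i - 1) + 1 + 1"
    and a0: "a0 \<le> int N - 1"
  shows "shift_down tau = {(a0, 1 - a0)}"
proof -
  let ?H = "\<lambda>a. lam_height (N - 2) (a - 1) + 1"
  have "2*n+n' = 0"
  proof (cases "a0 = int N - 1")
    case True
    have fi: "f i = 4 - int N + int i" if "i \<le> 2*n+n'" for i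
      using on[OF that] True N2 by (simp add: lam_height_def)
    have n0: "n = 0" using ballot_profile_linear[OF tf(2)] fi by simp
    have "n' = 0"
      by (rule straight_tile_before_valley[OF ci bi odd tT, of f]) (use tf True n0 in simp_all)
    then show ?thesis using n0 by simp
  next
    case False
    have "a0 = a0 \<and> 2*n+n' = 0"
    proof (rule resting_tile_on_descent[OF tf(1) tf(2) refl, of ?H])
      show "\<And>i. i \<le> 2 * n + n' \<Longrightarrow> f i = ?H (a0 + int i) + 1" using on by simp
      show "?H (a0 + 1) < ?H a0" using a0 False N2 by (simp add: lam_height_def)
    qed simp_all
    then show ?thesis by simp
  qed
  moreover have "f 0 = 3 - a0" using on[of 0] a0 N2 by (simp add: lam_height_def)
  ultimately show ?thesis using tf(1) by (simp add: tile_at_def shift_down_singleton)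
qed

lemma resting_tile_over_valley_tiles:
  assumes ci: "ci_tiling R' (\<lambda>a. lam_height (N - 2) (a - 1) + 1) (int (M + N)) T'"
    and bi: "typeBI T'" and odd: "odd M" and N2: "2 \<le> N"
    and col: "\<And>p. p \<in> R' \<Longrightarrow> 2 \<le> fst p \<and> fst p \<le> int (M + N) \<and> lam_height (N - 2) (fst p - 1) + 1 < snd p"
    and tT: "tau \<in> T'" and bot: "rests_on (\<lambda>a. lam_height (N - 2) (a - 1) + 1) tau"
  shows "\<exists>tau'\<in>valley_tiles M N. shift_down tau \<subseteq> tau'"
proof -
  have above: "\<And>p. p \<in> R' \<Longrightarrow> lam_height (N - 2) (fst p - 1) + 1 < snd p" using col by blast
  obtain a0 f n n' where tf: "tau = tile_at a0 f (2*n+n')" "ballot_profile f n n'" "tile_len tau = (n, n')"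
    and on: "\<And>i. i \<le> 2*n+n' \<Longrightarrow> f i = lam_height (N - 2) (a0 + int i - 1) + 1 + 1"
    using resting_tileE[OF ci above tT bot] by blast
  have sub: "tau \<subseteq> R'" using ci_tiling_subset[OF ci tT] .
  have mem: "(a0 + int i, f i) \<in> tau" if "i \<le> 2*n+n'" for i unfolding tf using that by (rule tile_at_memI)
  have "(a0, f 0) \<in> R'" using mem[of 0] sub by auto
  then have a02: "2 \<le> a0" using col by fastforce
  have "(a0 + int (2*n+n'), f (2*n+n')) \<in> R'" using mem[of "2*n+n'"] sub by auto
  then have aL: "a0 + int (2*n+n') \<le> int (M + N)" using col by fastforce
  show ?thesis
  proof (cases "a0 \<le> int N - 1")
    case True
    moreover have "{(a0, 1 - a0)} \<in> valley_tiles M N" using True a02 N2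
      unfolding valley_tiles_def left_singles_def by (intro UnI1 imageI) simp
    ultimately show ?thesis
      using resting_tile_left_of_valley[OF ci bi odd N2 tT tf on] by auto
  next
    case False
    then show ?thesis
      using resting_tile_right_of_valley[OF tf(1) on _ aL N2] by (auto simp: valley_tiles_def)
  qed
qed

lemma ci_tiling_add_valley_tiles:
  assumes ci: "ci_tiling R' (\<lambda>a. lam_height (N - 2) (a - 1) + 1) (int (M + N)) T'"
    and bi: "typeBI T'" and odd: "odd M" and N2: "2 \<le> N"
    and dis: "\<Union>(valley_tiles M N) \<inter> R' = {}"
    and col: "\<And>p. p \<in> R' \<Longrightarrow> 2 \<le> fst p \<and> fst p \<le> int (M + N) \<and> lam_height (N - 2) (fst p - 1) + 1 < snd p"
  shows "ci_tiling (\<Union>(valley_tiles M N) \<union> R') (lam_height N) (int (M + N)) (valley_tiles M N \<union> T')"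
proof (rule ci_tiling_Un[OF ci partition_valley_tiles dis valley_tiles_ballot valley_tiles_anchored
      valley_tiles_rest_or_covered[OF N2]])
  fix tau assume "tau \<in> T'" "rests_on (\<lambda>a. lam_height (N - 2) (a - 1) + 1) tau"
  then have "\<exists>t'\<in>valley_tiles M N. shift_down tau \<subseteq> t'"
    using resting_tile_over_valley_tiles[OF ci bi odd N2 col] by blast
  then show "rests_on (lam_height N) tau \<or> (\<exists>t'\<in>valley_tiles M N. shift_down tau \<subseteq> t')" ..
qed

lemma resting_if_covered_by_valley_tile:
  assumes P: "partition_on R0 T" and sub: "valley_tiles M N \<subseteq> T" and N2: "2 \<le> N"
    and tT: "tau \<in> T" "tau \<notin> valley_tiles M N" and tne: "tau \<noteq> {}"
    and t': "t' \<in> valley_tiles M N" "shift_down tau \<subseteq> t'"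
  shows "rests_on (\<lambda>a. lam_height (N - 2) (a - 1) + 1) tau"
proof -
  consider (s) "t' \<in> left_singles (N - 1)" | (A) "t' = anchor_line M N 1" | (B) "t' = anchor_line M N 3"
    using t'(1) by (auto simp: valley_tiles_def)
  then show ?thesis
  proof cases
    case s
    then obtain a where a: "t' = {(a, 1 - a)}" "1 \<le> a" "a \<le> int N - 1" using N2 by (auto simp: left_singles_def)
    then have "tau = {(a, 1 - a + 2)}" using shift_down_subset_singleton[of tau a "1 - a"] t'(2) tne by simp
    then show ?thesis using a N2 by (simp add: lam_height_def)
  next
    case A
    have "shift_tile 0 2 (shift_down tau) \<subseteq> shift_tile 0 2 (anchor_line M N 1)" using t'(2) A by simp
    then have "tau \<subseteq> anchor_line M N 3" unfolding shift_down_eq_shift_tile shift_tile_anchor_line by simp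
    moreover have "anchor_line M N 3 \<in> T" "tau \<noteq> anchor_line M N 3" using sub tT by (auto simp: valley_tiles_def)
    then have "tau \<inter> anchor_line M N 3 = {}"
      using P tT(1) unfolding partition_on_def pairwise_def disjnt_def by blast
    ultimately show ?thesis using tne by blast
  next
    case B
    have "shift_tile 0 2 (shift_down tau) \<subseteq> shift_tile 0 2 (anchor_line M N 3)" using t'(2) B by simp
    then have s5: "tau \<subseteq> anchor_line M N 5" unfolding shift_down_eq_shift_tile shift_tile_anchor_line by simp
    have "snd p - 1 \<le> lam_height (N - 2) (fst p - 1) + 1" if "p \<in> tau" for p
    proof -
      obtain x y where p: "p = (x, y)" by fastforce
      then have "int N \<le> x" "y = 5 + x - 2 * int N" using s5 that by (auto simp: mem_anchor_line)
      then show ?thesis using p N2 by (simp add: lam_height_def)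
    qed
    then show ?thesis by blast
  qed
qed

lemma ci_tiling_remove_valley_tiles:
  assumes ci: "ci_tiling (\<Union>(valley_tiles M N) \<union> R') (lam_height N) L T"
    and sub: "valley_tiles M N \<subseteq> T" and N2: "2 \<le> N"
    and dis: "\<Union>(valley_tiles M N) \<inter> R' = {}"
  shows "ci_tiling R' (\<lambda>a. lam_height (N - 2) (a - 1) + 1) L (T - valley_tiles M N)"
proof (rule ci_tiling_Diff[OF ci sub dis])
  fix tau assume bot: "rests_on (lam_height N) tau"
  have "snd p - 1 \<le> lam_height (N - 2) (fst p - 1) + 1" if "p \<in> tau" for p
    using bot that lam_height_le_shifted[OF N2, of "fst p"] by fastforce
  then show "rests_on (\<lambda>a. lam_height (N - 2) (a - 1) + 1) tau" by blast
next
  fix tau t' assume tau: "tau \<in> T - valley_tiles M N" and "tau \<noteq> {}"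
    and "t' \<in> valley_tiles M N" "shift_down tau \<subseteq> t'"
  moreover have "tau \<in> T" "tau \<notin> valley_tiles M N" using tau by auto
  ultimately show "rests_on (\<lambda>a. lam_height (N - 2) (a - 1) + 1) tau"
    using resting_if_covered_by_valley_tile[OF ci_tiling_parts(1)[OF ci] sub N2] by blast
qed

lemma mem_shifted_region_valley:
  assumes N2: "2 \<le> N" and l3: "length mu1 = M + 1 + (N - 2)"
    and p: "p \<in> shift_tile 1 1 (region (lamMN (M + 1) (N - 2)) mu1)"
  shows "2 \<le> fst p \<and> fst p \<le> int (M + N) \<and> lam_height (N - 2) (fst p - 1) + 1 < snd p"
proof -
  obtain a b where pp: "p = (a, b)" by fastforce
  then have "(a - 1, b - 1) \<in> region (lamMN (M + 1) (N - 2)) mu1" using p by simp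
  then show ?thesis unfolding pp mem_region_lamMN[OF l3] using N2 by auto
qed

lemma valley_tiles_disjoint_shifted_region:
  assumes N2: "2 \<le> N" and l3: "length mu1 = M + 1 + (N - 2)"
  shows "\<Union>(valley_tiles M N) \<inter> shift_tile 1 1 (region (lamMN (M + 1) (N - 2)) mu1) = {}"
proof -
  have "p \<notin> \<Union>(valley_tiles M N)" if "p \<in> shift_tile 1 1 (region (lamMN (M + 1) (N - 2)) mu1)" for p
  proof -
    obtain a b where pp: "p = (a, b)" by fastforce
    have c: "lam_height (N - 2) (a - 1) + 1 < b" using mem_shifted_region_valley[OF N2 l3 that] pp by simp
    show ?thesis
    proof (cases "a \<le> int N - 1")
      case True
      then show ?thesis using c pp N2 unfolding Union_valley_tiles
        by (auto simp: Union_left_singles mem_anchor_line lam_height_def)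
    next
      case False
      then show ?thesis using c pp N2 unfolding Union_valley_tiles
        by (auto simp: Union_left_singles mem_anchor_line lam_height_def)
    qed
  qed
  then show ?thesis by blast
qed

lemma glue_valley_tiles:
  assumes odd: "odd M" and N2: "2 \<le> N" and it: "(mu1, T2) \<in> bi_tilings (lamMN (M + 1) (N - 2))"
  shows "(True # mu1, valley_tiles M N \<union> shift_tiling 1 1 T2) \<in> bi_tilings (lamMN M N)"
    and "valley_tiles M N \<inter> shift_tiling 1 1 T2 = {}"
proof -
  let ?R3 = "region (lamMN (M + 1) (N - 2)) mu1"
  have M1: "1 \<le> M" using odd by presburger
  have w: "weakly_above mu1 (lamMN (M + 1) (N - 2))"
    and ci: "ci_tiling ?R3 (lam_height (N - 2)) (int (M + 1 + (N - 2))) T2" and bi: "typeBI T2"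
    using it unfolding bi_tilings_lamMN_iff by auto
  have l3: "length mu1 = M + 1 + (N - 2)" using w by (simp add: weakly_above_def)
  have ci2: "ci_tiling (shift_tile 1 1 ?R3) (\<lambda>a. lam_height (N - 2) (a - 1) + 1) (int (M + N)) (shift_tiling 1 1 T2)"
    using ci_tiling_shift_iff[of 1 1 ?R3 "lam_height (N - 2)" "int (M + 1 + (N - 2))" T2] ci N2
    by (simp add: add.commute)
  note dis = valley_tiles_disjoint_shifted_region[OF N2 l3]
  have len: "length mu1 + 1 = M + N" using l3 N2 by simp
  have "region (lamMN M N) (True # mu1) = \<Union>(valley_tiles M N) \<union> shift_tile 1 1 ?R3"
    using region_split_valley_tiles[OF N2 len weakly_above_valley_fwd(2)[OF M1 N2 w]]
    unfolding Union_valley_tiles by simp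
  moreover have "ci_tiling (\<Union>(valley_tiles M N) \<union> shift_tile 1 1 ?R3) (lam_height N) (int (M + N))
      (valley_tiles M N \<union> shift_tiling 1 1 T2)"
    by (rule ci_tiling_add_valley_tiles[OF ci2 _ odd N2 dis mem_shifted_region_valley[OF N2 l3]]) (use bi in simp)
  moreover show dT: "valley_tiles M N \<inter> shift_tiling 1 1 T2 = {}"
    by (rule disjoint_shift_tiling[OF _ dis]) (use ci in \<open>simp add: ci_tiling_def\<close>)
  moreover have "typeBI (valley_tiles M N \<union> shift_tiling 1 1 T2)"
    using typeBI_valley_tiles_Un[OF M1 odd _ dT] finite_of_bi_tilings[OF it] bi by simp
  ultimately show "(True # mu1, valley_tiles M N \<union> shift_tiling 1 1 T2) \<in> bi_tilings (lamMN M N)"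
    unfolding bi_tilings_lamMN_iff using weakly_above_valley_fwd(1)[OF M1 N2 w] by simp
qed

lemma (in up_start) valley_line_if_not_single:
  assumes "{valley_box N} \<notin> T"
  shows "anchor_line M N 1 \<in> T"
proof -
  have "valley_box N \<in> R" using left_single_box_mem_R N1 by simp
  then obtain tau where "tau \<in> T" "valley_box N \<in> tau" using covering_tile by blast
  then show ?thesis using valley_tile_cases assms by metis
qed

lemma (in up_start) valley_line_conditions:
  assumes A: "anchor_line M N 1 \<in> T"
  shows "odd M" "2 \<le> N" "valley_tiles M N \<subseteq> T"
proof -
  show "odd M" by (rule odd_if_valley_line[OF A])
  have B: "anchor_line M N 3 \<in> T" by (rule anchor_line_3_in_T[OF A])
  then show "valley_tiles M N \<subseteq> T" using left_singles_subset_T A by (simp add: valley_tiles_def)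
  show "2 \<le> N"
  proof (rule ccontr)
    assume "\<not> 2 \<le> N"
    then have N: "N = 1" using N1 by simp
    have "(int N, 3 - int N) \<in> anchor_line M N 3" by (simp add: mem_anchor_line)
    then have "(int N, 3 - int N) \<in> R" using tile_subset_R[OF B] by blast
    then have "3 - int N < 1 + height mu1 (nat (int N - 1))" unfolding mem_R by blast
    then show False using N by simp
  qed
qed

lemma (in up_start) cut_valley_tiles:
  assumes A: "anchor_line M N 1 \<in> T"
  shows "(mu1, shift_tiling (-1) (-1) (T - valley_tiles M N)) \<in> bi_tilings (lamMN (M + 1) (N - 2))"
proof -
  note odd = valley_line_conditions(1)[OF A] and N2 = valley_line_conditions(2)[OF A]
    and sub = valley_line_conditions(3)[OF A]
  have Bsub: "anchor_line M N 3 \<subseteq> R" using tile_subset_R sub by (simp add: valley_tiles_def)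
  let ?R3 = "region (lamMN (M + 1) (N - 2)) mu1"
  let ?T2 = "shift_tiling (-1) (-1) (T - valley_tiles M N)"
  have w: "weakly_above mu1 (lamMN (M + 1) (N - 2))" by (rule weakly_above_valley_bwd[OF M1 N2 length_mu1 Bsub])
  have l3: "length mu1 = M + 1 + (N - 2)" using w by (simp add: weakly_above_def)
  have ci: "ci_tiling R (lam_height N) (int (M + N)) T"
    using it unfolding bi_tilings_lamMN_iff by auto
  have "R = \<Union>(valley_tiles M N) \<union> shift_tile 1 1 ?R3"
    using region_split_valley_tiles[OF N2 length_mu1 Bsub] unfolding Union_valley_tiles by simp
  then have "ci_tiling (\<Union>(valley_tiles M N) \<union> shift_tile 1 1 ?R3) (lam_height N) (int (M + N)) T"
    using ci by simp
  then have "ci_tiling (shift_tile 1 1 ?R3) (\<lambda>a. lam_height (N - 2) (a - 1) + 1) (int (M + N)) (T - valley_tiles M N)"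
    by (rule ci_tiling_remove_valley_tiles[OF _ sub N2 valley_tiles_disjoint_shifted_region[OF N2 l3]])
  then have "ci_tiling ?R3 (lam_height (N - 2)) (int (M + 1 + (N - 2))) ?T2"
    using ci_tiling_shift_iff[of 1 1 ?R3 "lam_height (N - 2)" "int (M + 1 + (N - 2))" ?T2] N2
    by (simp add: add.commute)
  moreover have "typeBI ?T2"
    using typeBI_T typeBI_valley_tiles_Un[OF M1 odd, of "T - valley_tiles M N" N] finite_T sub
    by (simp add: Un_absorb1)
  ultimately show ?thesis unfolding bi_tilings_lamMN_iff using w by simp
qed

lemma valley_line_pairs_eq:
  assumes odd: "odd M" and N2: "2 \<le> N"
  shows "{(mu, T) \<in> bi_tilings (lamMN M N). hd mu = True \<and> {valley_box N} \<notin> T}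
    = (\<lambda>(mu1, T2). (True # mu1, valley_tiles M N \<union> shift_tiling 1 1 T2)) ` bi_tilings (lamMN (M + 1) (N - 2))"
proof (intro set_eqI iffI)
  fix x assume "x \<in> {(mu, T) \<in> bi_tilings (lamMN M N). hd mu = True \<and> {valley_box N} \<notin> T}"
  then obtain mu T where x: "x = (mu, T)" "(mu, T) \<in> bi_tilings (lamMN M N)" "hd mu = True"
    "{valley_box N} \<notin> T" by auto
  then have "length mu = M + N" by (simp add: bi_tilings_def weakly_above_def)
  then obtain mu1 where mu: "mu = True # mu1" using x(3) N2 by (cases mu) auto
  have M1: "1 \<le> M" using odd by presburger
  interpret up_start M N mu1 T using M1 N2 x(2) mu by unfold_locales simp_all
  have A: "anchor_line M N 1 \<in> T" by (rule valley_line_if_not_single[OF x(4)])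
  have "x = (True # mu1, valley_tiles M N \<union> shift_tiling 1 1 (shift_tiling (-1) (-1) (T - valley_tiles M N)))"
    using valley_line_conditions(3)[OF A] x mu by auto
  then show "x \<in> (\<lambda>(mu1, T2). (True # mu1, valley_tiles M N \<union> shift_tiling 1 1 T2)) ` bi_tilings (lamMN (M + 1) (N - 2))"
    using cut_valley_tiles[OF A] by force
next
  fix x assume "x \<in> (\<lambda>(mu1, T2). (True # mu1, valley_tiles M N \<union> shift_tiling 1 1 T2)) ` bi_tilings (lamMN (M + 1) (N - 2))"
  then obtain mu1 T2 where x: "x = (True # mu1, valley_tiles M N \<union> shift_tiling 1 1 T2)"
    "(mu1, T2) \<in> bi_tilings (lamMN (M + 1) (N - 2))" by auto
  let ?T = "valley_tiles M N \<union> shift_tiling 1 1 T2"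
  have it: "(True # mu1, ?T) \<in> bi_tilings (lamMN M N)" using glue_valley_tiles(1)[OF odd N2 x(2)] .
  have "{valley_box N} \<notin> ?T"
  proof
    assume v: "{valley_box N} \<in> ?T"
    have A: "anchor_line M N 1 \<in> ?T" by (simp add: valley_tiles_def)
    have P: "partition_on (region (lamMN M N) (True # mu1)) ?T"
      using it unfolding bi_tilings_iff ci_tiling_def by blast
    have "{valley_box N} = anchor_line M N 1"
      by (rule partition_same[OF P v A _ valley_box_mem_anchor_line]) simp
    then have "card {valley_box N} = Suc M" using card_anchor_line[of M N 1] by simp
    then show False using odd by simp
  qed
  then show "x \<in> {(mu, T) \<in> bi_tilings (lamMN M N). hd mu = True \<and> {valley_box N} \<notin> T}"
    using it x(1) by simp
qed

lemma valley_line_pairs_empty: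
  assumes M1: "1 \<le> M" and N1: "1 \<le> N" and c: "\<not> (odd M \<and> 2 \<le> N)"
  shows "{(mu, T) \<in> bi_tilings (lamMN M N). hd mu = True \<and> {valley_box N} \<notin> T} = {}"
proof (rule ccontr)
  assume "\<not> ?thesis"
  then obtain mu T where x: "(mu, T) \<in> bi_tilings (lamMN M N)" "hd mu = True" "{valley_box N} \<notin> T" by auto
  then have "length mu = M + N" by (simp add: bi_tilings_def weakly_above_def)
  then obtain mu1 where mu: "mu = True # mu1" using x(2) N1 by (cases mu) auto
  interpret up_start M N mu1 T using M1 N1 x(1) mu by unfold_locales simp_all
  show False using valley_line_conditions(1,2)[OF valley_line_if_not_single[OF x(3)]] c by simp
qed

lemma sum_valley_line:
  assumes M1: "1 \<le> M" and N1: "1 \<le> N"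
  shows "(\<Sum>(mu, T) \<in> {(mu, T) \<in> bi_tilings (lamMN M N). hd mu = True \<and> {valley_box N} \<notin> T}.
            monom (1::int) (art T))
    = (if odd M \<and> 2 \<le> N
       then monom 1 (M + N) * (\<Sum>(mu, T) \<in> bi_tilings (lamMN (M + 1) (N - 2)). monom 1 (art T)) else 0)"
proof (cases "odd M \<and> 2 \<le> N")
  case True
  then have odd: "odd M" and N2: "2 \<le> N" by simp_all
  have "(\<Sum>(mu, T) \<in> {(mu, T) \<in> bi_tilings (lamMN M N). hd mu = True \<and> {valley_box N} \<notin> T}.
            monom (1::int) (art T))
    = monom 1 (M + N) * (\<Sum>(mu, T) \<in> bi_tilings (lamMN (M + 1) (N - 2)). monom 1 (art T))"
  proof (rule sum_art_glue[OF valley_line_pairs_eq[OF odd N2]])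
    fix mu1 T2 assume "(mu1, T2) \<in> bi_tilings (lamMN (M + 1) (N - 2))"
    then show "finite T2 \<and> valley_tiles M N \<inter> shift_tiling 1 1 T2 = {}"
      using finite_of_bi_tilings glue_valley_tiles(2)[OF odd N2] by blast
  qed (simp_all add: sum_tile_weight_valley_tiles[OF M1 N1])
  then show ?thesis using True by simp
next
  case False
  then have "(if odd M \<and> 2 \<le> N
       then monom 1 (M + N) * (\<Sum>(mu, T) \<in> bi_tilings (lamMN (M + 1) (N - 2)). monom 1 (art T))
       else 0) = (0::int poly)" by (rule if_not_P)
  then show ?thesis unfolding valley_line_pairs_empty[OF M1 N1 False] by simp
qed

theorem mainTheorem6:
  fixes M N :: nat
  assumes "M \<ge> 1" and "N \<ge> 1"
  shows "PMN M N =
    (if even M then PMN M (N - 1) + monom 1 N * PMN (M - 1) N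
     else PMN M (N - 1) + monom 1 N * PMN (M - 1) N
          + (if N \<ge> 2 then monom 1 (M + N) * PMN (M + 1) (N - 2) else 0))"
proof -
  let ?f = "\<lambda>(mu, T). monom (1::int) (art T)"
  let ?I = "bi_tilings (lamMN M N)"
  let ?down = "{(mu, T) \<in> ?I. hd mu = False}"
  let ?single = "{(mu, T) \<in> ?I. hd mu = True \<and> {valley_box N} \<in> T}"
  let ?line = "{(mu, T) \<in> ?I. hd mu = True \<and> {valley_box N} \<notin> T}"
  have fin: "finite ?I" by (rule finite_bi_tilings)
  have split: "?I = ?down \<union> (?single \<union> ?line)" by auto
  have "sum ?f ?I = sum ?f ?down + sum ?f (?single \<union> ?line)"
    by (subst split, rule sum.union_disjoint) (use fin in \<open>auto intro: finite_subset\<close>)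
  also have "sum ?f (?single \<union> ?line) = sum ?f ?single + sum ?f ?line"
    by (rule sum.union_disjoint) (use fin in \<open>auto intro: finite_subset\<close>)
  finally have "PMN M N = sum ?f ?down + (sum ?f ?single + sum ?f ?line)"
    unfolding PMN_bi_tilings .
  moreover have "sum ?f ?down = PMN M (N - 1)"
    using sum_bi_tilings_Cons_same[of False "lamMN M (N - 1)"] lamMN_Suc[of M "N - 1"] assms(2)
    by (simp add: PMN_bi_tilings)
  moreover have "sum ?f ?single = monom 1 N * PMN (M - 1) N"
    using sum_valley_single[OF assms] by (simp add: PMN_bi_tilings)
  moreover have "sum ?f ?line = (if odd M \<and> 2 \<le> N then monom 1 (M + N) * PMN (M + 1) (N - 2) else 0)"
    using sum_valley_line[OF assms] by (simp add: PMN_bi_tilings)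
  ultimately show ?thesis by (simp add: add.assoc)
qed

end
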